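(* Let $P\in\mathcal{P}$ and $t\in[0,T]$. Then $$E_P[\alpha_t^T(P)]=\sup_{X\in L^1_G(\Omega_T)}E_P\big[E_P[X\mid\mathcal{F}_t]-\tilde{\mathbb{E}}_t[X]\big]$$ and $$\alpha_0^T(P)=\alpha_0^t(P)+E_P[\alpha_t^T(P)].$$
   Context: Fix $T>0$, $d\ge1$. $\Omega_T=C_0([0,T];\mathbb{R}^d)$, $B$ the canonical process, $\mathcal{F}_t=\sigma(B_s:s\le t)$. $(\hat{\mathbb{E}},(\hat{\mathbb{E}}_t))$ is the $G$-expectation for a monotone sublinear $G$, $\mathcal{P}$ the weakly compact convex set of probability measures with $\hat{\mathbb{E}}[X]=\sup_{P\in\mathcal{P}}E_P[X]$. $(\tilde{\mathbb{E}},(\tilde{\mathbb{E}}_t))$ is the consistent convex $\tilde G$-expectation associated to $\tilde G:\mathbb{S}_d\to\mathbb{R}$ with $\tilde G(0)=0$, monotone, convex, $\tilde G(A_1)-\tilde G(A_2)\le G(A_1-A_2)$; it is dominated by $\hat{\mathbb{E}}_t$ and consistent ($\tilde{\mathbb{E}}[\tilde{\mathbb{E}}_t[X]]=\tilde{\mathbb{E}}[X]$). $L^1_G(\Omega_t)$ is the completion of bounded Lipschitz cylinder functionals of $(B_s)_{s\le t}$ under $\hat{\mathbb{E}}[|\cdot|]$. Definitions: $\alpha_0^t(P):=\sup_{Y\in L^1_G(\Omega_t)}(E_P[Y]-\tilde{\mathbb{E}}[Y])$; $\alpha_t^T(P):=\operatorname{ess\,sup}^P_{Y\in L^1_G(\Omega_T)}(E_P[Y\mid\mathcal{F}_t]-\tilde{\mathbb{E}}_t[Y])$,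 $P$-a.s. *)

theory Defs
  imports "HOL-Probability.Probability"
begin

(* Path space C_0([0,T];R^d): paths are functions real => 'd, continuous on [0,T],
   starting at 0, and normalised to be constant outside [0,T]. *)
definition paths :: "real \<Rightarrow> (real \<Rightarrow> 'd::euclidean_space) set" where
  "paths T = {\<omega>. continuous_on {0..T} \<omega> \<and> \<omega> 0 = 0 \<and>
                (\<forall>s<0. \<omega> s = 0) \<and> (\<forall>s>T. \<omega> s = \<omega> T)}"

(* F_t = sigma(B_s : 0 <= s <= t) on Omega_T, B the canonical process *)
definition filt :: "real \<Rightarrow> real \<Rightarrow> (real \<Rightarrow> 'd::euclidean_space) measure" where
  "filt T t = sigma (paths T)
     {{\<omega> \<in> paths T. \<omega> s \<in> U} | s U. s \<in> {0..t} \<and> open U}"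

definition lip_cyl :: "real \<Rightarrow> real \<Rightarrow> ((real \<Rightarrow> 'd::euclidean_space) \<Rightarrow> real) \<Rightarrow> bool" where
  "lip_cyl T t X \<longleftrightarrow> (\<exists>(ts::real list) (\<phi>::'d list \<Rightarrow> real) L C.
      set ts \<subseteq> {0..t} \<and> (\<forall>xs. \<bar>\<phi> xs\<bar> \<le> C) \<and>
      (\<forall>xs ys. length xs = length ts \<longrightarrow> length ys = length ts \<longrightarrow>
          \<bar>\<phi> xs - \<phi> ys\<bar> \<le> L * (\<Sum>i<length ts. norm (xs ! i - ys ! i))) \<and>
      (\<forall>\<omega>\<in>paths T. X \<omega> = \<phi> (map \<omega> ts)))"

definition Ehat :: "'a measure set \<Rightarrow> ('a \<Rightarrow> real) \<Rightarrow> ereal" where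
  "Ehat Pset X = (SUP P\<in>Pset. ereal (\<integral>\<omega>. X \<omega> \<partial>P))"

definition Ehat_abs :: "'a measure set \<Rightarrow> ('a \<Rightarrow> real) \<Rightarrow> ennreal" where
  "Ehat_abs Pset X = (SUP P\<in>Pset. \<integral>\<^sup>+\<omega>. ennreal \<bar>X \<omega>\<bar> \<partial>P)"

definition L1G :: "(real \<Rightarrow> 'd::euclidean_space) measure set \<Rightarrow> real \<Rightarrow> real
                    \<Rightarrow> ((real \<Rightarrow> 'd) \<Rightarrow> real) set" where
  "L1G Pset T t = {X. X \<in> borel_measurable (filt T t) \<and>
      (\<exists>Xn. (\<forall>n. lip_cyl T t (Xn n)) \<and>
            ((\<lambda>n. Ehat_abs Pset (\<lambda>\<omega>. X \<omega> - Xn n \<omega>)) \<longlongrightarrow> 0) sequentially)}"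

definition qs :: "'a measure set \<Rightarrow> ('a \<Rightarrow> bool) \<Rightarrow> bool" where
  "qs Pset \<Phi> \<longleftrightarrow> (\<forall>P\<in>Pset. AE \<omega> in P. \<Phi> \<omega>)"

definition is_ess_sup :: "'a measure \<Rightarrow> ('a \<Rightarrow> ereal) set \<Rightarrow> ('a \<Rightarrow> ereal) \<Rightarrow> bool" where
  "is_ess_sup M F Z \<longleftrightarrow> Z \<in> borel_measurable M \<and> (\<forall>f\<in>F. AE x in M. f x \<le> Z x) \<and>
     (\<forall>Z'\<in>borel_measurable M. (\<forall>f\<in>F. AE x in M. f x \<le> Z' x) \<longrightarrow> (AE x in M. Z x \<le> Z' x))"

definition ess_sup_fam :: "'a measure \<Rightarrow> ('a \<Rightarrow> ereal) set \<Rightarrow> ('a \<Rightarrow> ereal)" where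
  "ess_sup_fam M F = (SOME Z. is_ess_sup M F Z)"

definition alpha0 :: "(real \<Rightarrow> 'd::euclidean_space) measure set \<Rightarrow> real
      \<Rightarrow> (((real \<Rightarrow> 'd) \<Rightarrow> real) \<Rightarrow> real) \<Rightarrow> real \<Rightarrow> (real \<Rightarrow> 'd) measure \<Rightarrow> ereal" where
  "alpha0 Pset T Etil t P = (SUP Y\<in>L1G Pset T t. ereal ((\<integral>\<omega>. Y \<omega> \<partial>P) - Etil Y))"

definition alphaT :: "(real \<Rightarrow> 'd::euclidean_space) measure set \<Rightarrow> real
      \<Rightarrow> (real \<Rightarrow> ((real \<Rightarrow> 'd) \<Rightarrow> real) \<Rightarrow> (real \<Rightarrow> 'd) \<Rightarrow> real) \<Rightarrow> real
      \<Rightarrow> (real \<Rightarrow> 'd) measure \<Rightarrow> (real \<Rightarrow> 'd) \<Rightarrow> ereal" where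
  "alphaT Pset T Et t P = ess_sup_fam (restr_to_subalg P (filt T t))
     {(\<lambda>\<omega>. ereal (real_cond_exp P (filt T t) Y \<omega> - Et t Y \<omega>)) | Y. Y \<in> L1G Pset T T}"

(* E_P of a [0,\<infinity>]-valued (a.s. nonnegative) extended-real random variable *)
definition exp_ereal :: "'a measure \<Rightarrow> ('a \<Rightarrow> ereal) \<Rightarrow> ereal" where
  "exp_ereal P Z = enn2ereal (\<integral>\<^sup>+\<omega>. e2ennreal (Z \<omega>) \<partial>P)"

end

theory Submission
  imports Defs
begin

text \<open>
  Write \<open>g\<^sub>X = E\<^sub>P[X | \<F>\<^sub>t] - \<tilde>E\<^sub>t[X]\<close>. The family \<open>{g\<^sub>X}\<close> is upward directed up to
  arbitrarily small \<open>L\<^sup>1(P)\<close> errors: by conditional convexity of \<open>\<tilde>E\<^sub>t\<close>, pasting \<open>X\<^sub>1\<close> and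
  \<open>X\<^sub>2\<close> with an \<open>\<F>\<^sub>t\<close>-measurable weight \<open>w\<close> gives a gap at least \<open>w g\<^sub>1 + (1 - w) g\<^sub>2\<close>, and
  \<open>w\<close> may be any bounded Lipschitz cylinder functional approximating the indicator of
  \<open>{g\<^sub>1 \<ge> g\<^sub>2}\<close>, which is possible because such sets generate \<open>\<F>\<^sub>t\<close>. The essential supremum
  \<open>\<alpha>\<^sub>t\<^sup>T(P)\<close> is the supremum of a countable subfamily, hence the increasing limit of finite
  maxima, each of which is nearly a single \<open>g\<^sub>X\<close>; monotone convergence gives the first identity.
  The second follows from \<open>E\<^sub>P[X] - \<tilde>E[X] = (E\<^sub>P[\<tilde>E\<^sub>t X] - \<tilde>E[\<tilde>E\<^sub>t X]) + E\<^sub>P[g\<^sub>X]\<close> and,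
  conversely, from the translation invariance of \<open>\<tilde>E\<^sub>t\<close> applied to \<open>X - \<tilde>E\<^sub>t X + Y\<close>.
\<close>

section \<open>Bounded Lipschitz functions of finitely many coordinates\<close>

definition lip_bounded :: "nat \<Rightarrow> ('a::real_normed_vector list \<Rightarrow> real) \<Rightarrow> real \<Rightarrow> real \<Rightarrow> bool" where
  "lip_bounded n \<phi> L C \<longleftrightarrow> (\<forall>xs. \<bar>\<phi> xs\<bar> \<le> C) \<and>
     (\<forall>xs ys. length xs = n \<longrightarrow> length ys = n \<longrightarrow>
          \<bar>\<phi> xs - \<phi> ys\<bar> \<le> L * (\<Sum>i<n. norm (xs ! i - ys ! i)))"

lemma lip_cyl_iff_lip_bounded:
  "lip_cyl T t X \<longleftrightarrow> (\<exists>ts \<phi> L C. set ts \<subseteq> {0..t} \<and> lip_bounded (length ts) \<phi> L C \<and>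
      (\<forall>\<omega>\<in>paths T. X \<omega> = \<phi> (map \<omega> ts)))"
  unfolding lip_cyl_def lip_bounded_def by blast

lemma lip_bounded_bound_nonneg: "lip_bounded n \<phi> L C \<Longrightarrow> 0 \<le> C"
  unfolding lip_bounded_def by (meson abs_ge_zero order_trans)

lemma lip_bounded_abs_diff_le:
  assumes "lip_bounded n \<phi> L C" "length xs = n" "length ys = n"
  shows "\<bar>\<phi> xs - \<phi> ys\<bar> \<le> \<bar>L\<bar> * (\<Sum>i<n. norm (xs ! i - ys ! i))"
proof -
  have "\<bar>\<phi> xs - \<phi> ys\<bar> \<le> L * (\<Sum>i<n. norm (xs ! i - ys ! i))"
    using assms unfolding lip_bounded_def by blast
  also have "\<dots> \<le> \<bar>L\<bar> * (\<Sum>i<n. norm (xs ! i - ys ! i))"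
    by (intro mult_right_mono sum_nonneg) auto
  finally show ?thesis .
qed

lemma lip_bounded_const: "lip_bounded 0 (\<lambda>_. c) 0 \<bar>c\<bar>"
  unfolding lip_bounded_def by simp

lemma lip_bounded_Cons:
  assumes "lip_bounded (Suc n) \<phi> L C"
  shows "lip_bounded n (\<lambda>xs. \<phi> (c # xs)) L C"
  unfolding lip_bounded_def
proof (intro conjI allI impI)
  fix xs show "\<bar>\<phi> (c # xs)\<bar> \<le> C" using assms unfolding lip_bounded_def by blast
next
  fix xs ys :: "'a list" assume "length xs = n" "length ys = n"
  then have "\<bar>\<phi> (c # xs) - \<phi> (c # ys)\<bar> \<le> L * (\<Sum>i<Suc n. norm ((c # xs) ! i - (c # ys) ! i))"
    using assms unfolding lip_bounded_def by auto
  also have "(\<Sum>i<Suc n. norm ((c # xs) ! i - (c # ys) ! i)) = (\<Sum>i<n. norm (xs ! i - ys ! i))"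
    by (subst sum.lessThan_Suc_shift) simp
  finally show "\<bar>\<phi> (c # xs) - \<phi> (c # ys)\<bar> \<le> L * (\<Sum>i<n. norm (xs ! i - ys ! i))" .
qed

lemma lip_bounded_Cons_abs_diff_le:
  assumes "lip_bounded (Suc n) \<phi> L C" "length r = n"
  shows "\<bar>\<phi> (x # r) - \<phi> (c # r)\<bar> \<le> \<bar>L\<bar> * norm (x - c)"
proof -
  have "\<bar>\<phi> (x # r) - \<phi> (c # r)\<bar> \<le> \<bar>L\<bar> * (\<Sum>i<Suc n. norm ((x # r) ! i - (c # r) ! i))"
    using lip_bounded_abs_diff_le[OF assms(1)] assms(2) by simp
  also have "(\<Sum>i<Suc n. norm ((x # r) ! i - (c # r) ! i)) = norm (x - c)"
    by (subst sum.lessThan_Suc_shift) simp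
  finally show ?thesis .
qed

text \<open>A Lipschitz function is the infimum of its cones over a dense set; with a countable
  dense set this gives measurability one coordinate at a time.\<close>

lemma lip_bounded_Cons_eq_INF:
  fixes x :: "'a::real_normed_vector"
  assumes lp: "lip_bounded (Suc n) \<phi> L C" and r: "length r = n"
    and D: "\<And>U. open U \<Longrightarrow> U \<noteq> {} \<Longrightarrow> \<exists>d\<in>D. d \<in> U"
  shows "\<phi> (x # r) = (INF c\<in>D. \<phi> (c # r) + \<bar>L\<bar> * norm (x - c))"
proof (rule antisym)
  have lb: "\<phi> (x # r) \<le> \<phi> (c # r) + \<bar>L\<bar> * norm (x - c)" for c
    using lip_bounded_Cons_abs_diff_le[OF lp r, of x c] by linarith
  show "\<phi> (x # r) \<le> (INF c\<in>D. \<phi> (c # r) + \<bar>L\<bar> * norm (x - c))"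
    using D[of UNIV] lb by (intro cINF_greatest) auto
  have bdd: "bdd_below ((\<lambda>c. \<phi> (c # r) + \<bar>L\<bar> * norm (x - c)) ` D)"
    by (rule bdd_belowI2[of _ "\<phi> (x # r)"]) (rule lb)
  show "(INF c\<in>D. \<phi> (c # r) + \<bar>L\<bar> * norm (x - c)) \<le> \<phi> (x # r)"
  proof (rule field_le_epsilon)
    fix e :: real assume e: "0 < e"
    define \<delta> where "\<delta> = e / (2 * \<bar>L\<bar> + 1)"
    have "0 < \<delta>" using e by (simp add: \<delta>_def add_pos_nonneg)
    then obtain d where d: "d \<in> D" "norm (x - d) < \<delta>"
      using D[of "ball x \<delta>"] by (auto simp: dist_norm)
    have "\<bar>L\<bar> * norm (x - d) \<le> \<bar>L\<bar> * \<delta>" using d(2) by (intro mult_left_mono) auto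
    also have "\<dots> \<le> e / 2" using e by (simp add: \<delta>_def field_simps)
    finally have "\<phi> (d # r) + \<bar>L\<bar> * norm (x - d) \<le> \<phi> (x # r) + e"
      using lip_bounded_Cons_abs_diff_le[OF lp r, of x d] by linarith
    moreover have "(INF c\<in>D. \<phi> (c # r) + \<bar>L\<bar> * norm (x - c)) \<le> \<phi> (d # r) + \<bar>L\<bar> * norm (x - d)"
      using bdd d(1) by (rule cINF_lower)
    ultimately show "(INF c\<in>D. \<phi> (c # r) + \<bar>L\<bar> * norm (x - c)) \<le> \<phi> (x # r) + e" by linarith
  qed
qed

lemma measurable_lip_bounded_map:
  fixes ts :: "'t list" and \<phi> :: "'a::{real_normed_vector, second_countable_topology} list \<Rightarrow> real"
  assumes "lip_bounded (length ts) \<phi> L C" "\<And>s. s \<in> set ts \<Longrightarrow> (\<lambda>\<omega>. \<omega> s) \<in> borel_measurable M"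
  shows "(\<lambda>\<omega>. \<phi> (map \<omega> ts)) \<in> borel_measurable M"
  using assms
proof (induction ts arbitrary: \<phi>)
  case Nil then show ?case by simp
next
  case (Cons s ts)
  obtain D :: "'a set" where D: "countable D" "\<And>U. open U \<Longrightarrow> U \<noteq> {} \<Longrightarrow> \<exists>d\<in>D. d \<in> U"
    using countable_dense_exists by blast
  have IH: "(\<lambda>\<omega>. \<phi> (c # map \<omega> ts)) \<in> borel_measurable M" for c
    using Cons.IH[of "\<lambda>xs. \<phi> (c # xs)"] lip_bounded_Cons[of "length ts" \<phi> L C c] Cons.prems by auto
  have [measurable]: "(\<lambda>\<omega>. \<omega> s) \<in> borel_measurable M" using Cons.prems by auto
  have "\<phi> (map \<omega> (s # ts)) = (INF c\<in>D. \<phi> (c # map \<omega> ts) + \<bar>L\<bar> * norm (\<omega> s - c))" for \<omega>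
    using lip_bounded_Cons_eq_INF[of "length ts" \<phi> L C "map \<omega> ts" D "\<omega> s"] Cons.prems D by auto
  then show ?case
    by (simp only:) (rule borel_measurable_cINF_real; use D(1) IH in auto)
qed

lemma sum_lessThan_add_split:
  "(\<Sum>i<a + b. f i) = (\<Sum>i<a. f i) + (\<Sum>i<b. f (a + i) :: 'a::comm_monoid_add)"
  for a b :: nat
  by (induction b) (auto simp: add.assoc)

lemma lip_bounded_combine:
  fixes op :: "real \<Rightarrow> real \<Rightarrow> real"
  assumes l1: "lip_bounded n1 \<phi>1 L1 C1" and l2: "lip_bounded n2 \<phi>2 L2 C2" and K: "0 \<le> K"
    and op_lip: "\<And>a b a' b'. \<bar>a\<bar> \<le> C1 \<Longrightarrow> \<bar>a'\<bar> \<le> C1 \<Longrightarrow> \<bar>b\<bar> \<le> C2 \<Longrightarrow> \<bar>b'\<bar> \<le> C2 \<Longrightarrow>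
        \<bar>op a b - op a' b'\<bar> \<le> K * (\<bar>a - a'\<bar> + \<bar>b - b'\<bar>)"
    and op_bound: "\<And>a b. \<bar>a\<bar> \<le> C1 \<Longrightarrow> \<bar>b\<bar> \<le> C2 \<Longrightarrow> \<bar>op a b\<bar> \<le> D"
  shows "lip_bounded (n1 + n2) (\<lambda>xs. op (\<phi>1 (take n1 xs)) (\<phi>2 (drop n1 xs))) (K * (\<bar>L1\<bar> + \<bar>L2\<bar>)) D"
  unfolding lip_bounded_def
proof (intro conjI allI impI)
  fix xs :: "'a list"
  show "\<bar>op (\<phi>1 (take n1 xs)) (\<phi>2 (drop n1 xs))\<bar> \<le> D"
    using l1 l2 unfolding lip_bounded_def by (intro op_bound) auto
next
  fix xs ys :: "'a list" assume xs: "length xs = n1 + n2" and ys: "length ys = n1 + n2"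
  define S1 where "S1 = (\<Sum>i<n1. norm (xs ! i - ys ! i))"
  define S2 where "S2 = (\<Sum>i<n2. norm (xs ! (n1 + i) - ys ! (n1 + i)))"
  have S: "0 \<le> S1" "0 \<le> S2" unfolding S1_def S2_def by (auto intro: sum_nonneg)
  have "\<bar>\<phi>1 (take n1 xs) - \<phi>1 (take n1 ys)\<bar> \<le> \<bar>L1\<bar> * S1"
    using lip_bounded_abs_diff_le[OF l1, of "take n1 xs" "take n1 ys"] xs ys by (simp add: S1_def)
  moreover have "\<bar>\<phi>2 (drop n1 xs) - \<phi>2 (drop n1 ys)\<bar> \<le> \<bar>L2\<bar> * S2"
    using lip_bounded_abs_diff_le[OF l2, of "drop n1 xs" "drop n1 ys"] xs ys by (simp add: S2_def)
  ultimately have "\<bar>op (\<phi>1 (take n1 xs)) (\<phi>2 (drop n1 xs)) - op (\<phi>1 (take n1 ys)) (\<phi>2 (drop n1 ys))\<bar>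
      \<le> K * (\<bar>L1\<bar> * S1 + \<bar>L2\<bar> * S2)"
    using l1 l2 K unfolding lip_bounded_def
    by (meson add_mono mult_left_mono op_lip order_trans)
  also have "\<dots> \<le> K * ((\<bar>L1\<bar> + \<bar>L2\<bar>) * (S1 + S2))"
    using S K by (intro mult_left_mono) (auto simp: algebra_simps)
  also have "S1 + S2 = (\<Sum>i<n1 + n2. norm (xs ! i - ys ! i))"
    unfolding S1_def S2_def by (rule sum_lessThan_add_split[symmetric])
  finally show "\<bar>op (\<phi>1 (take n1 xs)) (\<phi>2 (drop n1 xs)) - op (\<phi>1 (take n1 ys)) (\<phi>2 (drop n1 ys))\<bar>
      \<le> K * (\<bar>L1\<bar> + \<bar>L2\<bar>) * (\<Sum>i<n1 + n2. norm (xs ! i - ys ! i))" by (simp add: mult.assoc)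
qed

lemma lip_bounded_add:
  assumes "lip_bounded n1 \<phi>1 L1 C1" "lip_bounded n2 \<phi>2 L2 C2"
  shows "lip_bounded (n1 + n2) (\<lambda>xs. \<phi>1 (take n1 xs) + \<phi>2 (drop n1 xs)) (1 * (\<bar>L1\<bar> + \<bar>L2\<bar>)) (C1 + C2)"
  by (rule lip_bounded_combine[OF assms, where op = "(+)"]) auto

lemma lip_bounded_mult:
  assumes l1: "lip_bounded n1 \<phi>1 L1 C1" and l2: "lip_bounded n2 \<phi>2 L2 C2"
  shows "lip_bounded (n1 + n2) (\<lambda>xs. \<phi>1 (take n1 xs) * \<phi>2 (drop n1 xs))
           ((C1 + C2) * (\<bar>L1\<bar> + \<bar>L2\<bar>)) (C1 * C2)"
proof (rule lip_bounded_combine[OF assms, where op = "(*)"])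
  have C: "0 \<le> C1" "0 \<le> C2" using lip_bounded_bound_nonneg l1 l2 by auto
  then show "0 \<le> C1 + C2" by simp
  fix a b a' b' :: real
  assume h: "\<bar>a\<bar> \<le> C1" "\<bar>a'\<bar> \<le> C1" "\<bar>b\<bar> \<le> C2" "\<bar>b'\<bar> \<le> C2"
  have "\<bar>a * b - a' * b'\<bar> = \<bar>a * (b - b') + b' * (a - a')\<bar>" by (simp add: algebra_simps)
  also have "\<dots> \<le> \<bar>a\<bar> * \<bar>b - b'\<bar> + \<bar>b'\<bar> * \<bar>a - a'\<bar>" by (metis abs_mult abs_triangle_ineq)
  also have "\<dots> \<le> C1 * \<bar>b - b'\<bar> + C2 * \<bar>a - a'\<bar>"
    using h by (intro add_mono mult_right_mono) auto
  also have "\<dots> \<le> (C1 + C2) * (\<bar>a - a'\<bar> + \<bar>b - b'\<bar>)" using C by (simp add: algebra_simps)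
  finally show "\<bar>a * b - a' * b'\<bar> \<le> (C1 + C2) * (\<bar>a - a'\<bar> + \<bar>b - b'\<bar>)" .
next
  fix a b :: real assume "\<bar>a\<bar> \<le> C1" "\<bar>b\<bar> \<le> C2"
  then show "\<bar>a * b\<bar> \<le> C1 * C2" by (simp add: abs_mult mult_mono')
qed

lemma lip_bounded_min_infdist:
  fixes S :: "'a::real_normed_vector set"
  assumes k: "0 \<le> k"
  shows "lip_bounded 1 (\<lambda>xs. min 1 (k * infdist (hd xs) S)) k 1"
  unfolding lip_bounded_def
proof (intro conjI allI impI)
  fix xs ys :: "'a list" assume "length xs = 1" "length ys = 1"
  have "\<bar>min 1 (k * infdist (hd xs) S) - min 1 (k * infdist (hd ys) S)\<bar>
      \<le> \<bar>k * infdist (hd xs) S - k * infdist (hd ys) S\<bar>"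
    by (auto simp: min_def)
  also have "\<dots> \<le> k * dist (hd xs) (hd ys)"
    using mult_left_mono[OF infdist_triangle_abs k] k by (simp add: abs_mult right_diff_distrib[symmetric])
  also have "dist (hd xs) (hd ys) = (\<Sum>i<1. norm (xs ! i - ys ! i))"
    using \<open>length xs = 1\<close> \<open>length ys = 1\<close> by (cases xs; cases ys) (auto simp: dist_norm)
  finally show "\<bar>min 1 (k * infdist (hd xs) S) - min 1 (k * infdist (hd ys) S)\<bar>
      \<le> k * (\<Sum>i<1. norm (xs ! i - ys ! i))" .
qed (use k in \<open>auto simp: infdist_nonneg\<close>)

definition coord_events :: "real \<Rightarrow> real \<Rightarrow> (real \<Rightarrow> 'd::euclidean_space) set set" where
  "coord_events T t = {{\<omega> \<in> paths T. \<omega> s \<in> U} | s U. s \<in> {0..t} \<and> open U}"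

lemma space_filt [simp]: "space (filt T t) = paths T"
  unfolding filt_def by (simp add: space_measure_of_conv)

lemma sets_filt: "sets (filt T t) = sigma_sets (paths T) (coord_events T t)"
  unfolding filt_def coord_events_def by (rule sets_measure_of) auto

lemma sets_filt_mono: "t \<le> s \<Longrightarrow> sets (filt T t) \<subseteq> sets (filt T s)"
  unfolding sets_filt by (intro sigma_sets_mono') (unfold coord_events_def, fastforce)

lemma subalgebra_filt:
  assumes "sets Q = sets (filt T T)" "space Q = paths T" "s \<le> T"
  shows "subalgebra Q (filt T s)"
  unfolding subalgebra_def using assms sets_filt_mono[OF assms(3), of T] by auto

lemma measurable_coord_filt:
  "s \<in> {0..t} \<Longrightarrow> (\<lambda>\<omega>::real \<Rightarrow> 'd::euclidean_space. \<omega> s) \<in> borel_measurable (filt T t)"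
proof (rule borel_measurableI)
  fix U :: "'d set" assume "s \<in> {0..t}" "open U"
  then have "{\<omega> \<in> paths T. \<omega> s \<in> U} \<in> sets (filt T t)"
    unfolding sets_filt coord_events_def by blast
  moreover have "(\<lambda>\<omega>. \<omega> s) -` U \<inter> space (filt T t) = {\<omega> \<in> paths T. \<omega> s \<in> U}" by auto
  ultimately show "(\<lambda>\<omega>. \<omega> s) -` U \<inter> space (filt T t) \<in> sets (filt T t)" by simp
qed

lemma lip_cyl_measurable:
  assumes "lip_cyl T t X"
  shows "X \<in> borel_measurable (filt T t)"
proof -
  obtain ts \<phi> L C where X: "set ts \<subseteq> {0..t}" "lip_bounded (length ts) \<phi> L C"
      "\<forall>\<omega>\<in>paths T. X \<omega> = \<phi> (map \<omega> ts)"
    using assms unfolding lip_cyl_iff_lip_bounded by blast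
  have "(\<lambda>\<omega>. \<phi> (map \<omega> ts)) \<in> borel_measurable (filt T t)"
    using X(1,2) by (intro measurable_lip_bounded_map[of ts \<phi> L C]) (auto intro!: measurable_coord_filt)
  moreover have "X \<in> borel_measurable (filt T t) \<longleftrightarrow> (\<lambda>\<omega>. \<phi> (map \<omega> ts)) \<in> borel_measurable (filt T t)"
    by (rule measurable_cong) (simp add: X(3))
  ultimately show ?thesis by simp
qed

lemma lip_cyl_bounded:
  assumes "lip_cyl T t X"
  obtains C where "\<And>\<omega>. \<omega> \<in> paths T \<Longrightarrow> \<bar>X \<omega>\<bar> \<le> C"
proof -
  obtain ts \<phi> L C where "lip_bounded (length ts) \<phi> L C" "\<forall>\<omega>\<in>paths T. X \<omega> = \<phi> (map \<omega> ts)"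
    using assms unfolding lip_cyl_iff_lip_bounded by blast
  then show ?thesis by (intro that[of C]) (auto simp: lip_bounded_def)
qed

lemma lip_cyl_mono:
  assumes "t \<le> s" "lip_cyl T t X" shows "lip_cyl T s X"
proof -
  obtain ts \<phi> L C where "set ts \<subseteq> {0..t}" "lip_bounded (length ts) \<phi> L C"
      "\<forall>\<omega>\<in>paths T. X \<omega> = \<phi> (map \<omega> ts)"
    using assms(2) unfolding lip_cyl_iff_lip_bounded by blast
  moreover have "set ts \<subseteq> {0..s}" if "set ts \<subseteq> {0..t}" for ts :: "real list"
    using that assms(1) by auto
  ultimately show ?thesis unfolding lip_cyl_iff_lip_bounded by blast
qed

lemma lip_cyl_const: "0 \<le> t \<Longrightarrow> lip_cyl T t (\<lambda>_. c)"
  unfolding lip_cyl_iff_lip_bounded using lip_bounded_const[of c] by (intro exI[of _ "[]"]) auto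

lemma lip_cyl_binop:
  fixes X Y :: "(real \<Rightarrow> 'd::euclidean_space) \<Rightarrow> real"
  assumes X: "lip_cyl T t X" and Y: "lip_cyl T t Y"
    and op: "\<And>n1 n2 (\<phi>1::'d list \<Rightarrow> real) (\<phi>2::'d list \<Rightarrow> real) L1 L2 C1 C2.
        lip_bounded n1 \<phi>1 L1 C1 \<Longrightarrow> lip_bounded n2 \<phi>2 L2 C2 \<Longrightarrow>
        \<exists>L C. lip_bounded (n1 + n2) (\<lambda>xs. op (\<phi>1 (take n1 xs)) (\<phi>2 (drop n1 xs))) L C"
  shows "lip_cyl T t (\<lambda>\<omega>. op (X \<omega>) (Y \<omega>))"
proof -
  obtain ts1 \<phi>1 L1 C1 where X': "set ts1 \<subseteq> {0..t}" "lip_bounded (length ts1) \<phi>1 L1 C1"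
      "\<forall>\<omega>\<in>paths T. X \<omega> = \<phi>1 (map \<omega> ts1)"
    using X unfolding lip_cyl_iff_lip_bounded by blast
  obtain ts2 \<phi>2 L2 C2 where Y': "set ts2 \<subseteq> {0..t}" "lip_bounded (length ts2) \<phi>2 L2 C2"
      "\<forall>\<omega>\<in>paths T. Y \<omega> = \<phi>2 (map \<omega> ts2)"
    using Y unfolding lip_cyl_iff_lip_bounded by blast
  obtain L C where l: "lip_bounded (length ts1 + length ts2)
      (\<lambda>xs. op (\<phi>1 (take (length ts1) xs)) (\<phi>2 (drop (length ts1) xs))) L C"
    using op[OF X'(2) Y'(2)] by blast
  show ?thesis unfolding lip_cyl_iff_lip_bounded
    by (rule exI[of _ "ts1 @ ts2"], rule exI[of _ "\<lambda>xs. op (\<phi>1 (take (length ts1) xs)) (\<phi>2 (drop (length ts1) xs))"])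
       (use X' Y' l in auto)
qed

lemma lip_cyl_add: "lip_cyl T t X \<Longrightarrow> lip_cyl T t Y \<Longrightarrow> lip_cyl T t (\<lambda>\<omega>. X \<omega> + Y \<omega>)"
  by (rule lip_cyl_binop[where op = "(+)"]) (use lip_bounded_add in blast)+

lemma lip_cyl_mult: "lip_cyl T t X \<Longrightarrow> lip_cyl T t Y \<Longrightarrow> lip_cyl T t (\<lambda>\<omega>. X \<omega> * Y \<omega>)"
  by (rule lip_cyl_binop[where op = "(*)"]) (use lip_bounded_mult in blast)+

lemma lip_cyl_one_minus: "0 \<le> t \<Longrightarrow> lip_cyl T t X \<Longrightarrow> lip_cyl T t (\<lambda>\<omega>. 1 - X \<omega>)"
  using lip_cyl_add[OF lip_cyl_const[of t T 1] lip_cyl_mult[OF lip_cyl_const[of t T "-1"], of X]] by simp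

lemma lip_cyl_uminus: "0 \<le> t \<Longrightarrow> lip_cyl T t X \<Longrightarrow> lip_cyl T t (\<lambda>\<omega>. - X \<omega>)"
  using lip_cyl_mult[OF lip_cyl_const[of t T "-1"], of X] by simp

lemma Ehat_abs_le_add:
  assumes "\<And>\<omega>. \<bar>f \<omega>\<bar> \<le> \<bar>g \<omega>\<bar> + \<bar>h \<omega>\<bar>"
    and "\<And>Q. Q \<in> Pset \<Longrightarrow> g \<in> borel_measurable Q \<and> h \<in> borel_measurable Q"
  shows "Ehat_abs Pset f \<le> Ehat_abs Pset g + Ehat_abs Pset h"
  unfolding Ehat_abs_def
proof (rule SUP_least)
  fix Q assume Q: "Q \<in> Pset"
  have "(\<integral>\<^sup>+\<omega>. ennreal \<bar>f \<omega>\<bar> \<partial>Q) \<le> (\<integral>\<^sup>+\<omega>. ennreal \<bar>g \<omega>\<bar> + ennreal \<bar>h \<omega>\<bar> \<partial>Q)"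
    using assms(1) by (intro nn_integral_mono) (simp add: ennreal_plus[symmetric] del: ennreal_plus)
  also have "\<dots> = (\<integral>\<^sup>+\<omega>. ennreal \<bar>g \<omega>\<bar> \<partial>Q) + (\<integral>\<^sup>+\<omega>. ennreal \<bar>h \<omega>\<bar> \<partial>Q)"
    using assms(2)[OF Q] by (intro nn_integral_add) auto
  also have "\<dots> \<le> (SUP Q\<in>Pset. \<integral>\<^sup>+\<omega>. ennreal \<bar>g \<omega>\<bar> \<partial>Q) + (SUP Q\<in>Pset. \<integral>\<^sup>+\<omega>. ennreal \<bar>h \<omega>\<bar> \<partial>Q)"
    using Q by (intro add_mono SUP_upper)
  finally show "(\<integral>\<^sup>+\<omega>. ennreal \<bar>f \<omega>\<bar> \<partial>Q) \<le> \<dots>" .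
qed

context
  fixes Pset :: "(real \<Rightarrow> 'd::euclidean_space) measure set" and T :: real
  assumes Pset_prob: "\<And>Q. Q \<in> Pset \<Longrightarrow> prob_space Q \<and> space Q = paths T \<and> sets Q = sets (filt T T)"
begin

lemma measurable_filt_Pset:
  assumes "Q \<in> Pset" "s \<le> T" "X \<in> borel_measurable (filt T s)"
  shows "X \<in> borel_measurable Q"
  using Pset_prob[OF assms(1)] assms(2,3) by (blast intro: measurable_from_subalg subalgebra_filt)

lemma L1G_measurable: "X \<in> L1G Pset T s \<Longrightarrow> X \<in> borel_measurable (filt T s)"
  unfolding L1G_def by auto

lemma L1G_measurable_Pset: "Q \<in> Pset \<Longrightarrow> s \<le> T \<Longrightarrow> X \<in> L1G Pset T s \<Longrightarrow> X \<in> borel_measurable Q"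
  using measurable_filt_Pset L1G_measurable by blast

lemma lip_cyl_measurable_Pset: "Q \<in> Pset \<Longrightarrow> s \<le> T \<Longrightarrow> lip_cyl T s X \<Longrightarrow> X \<in> borel_measurable Q"
  using measurable_filt_Pset lip_cyl_measurable by blast

lemma lip_cyl_integrable:
  assumes "Q \<in> Pset" "s \<le> T" "lip_cyl T s X" shows "integrable Q X"
proof -
  interpret prob_space Q using Pset_prob[OF assms(1)] by simp
  obtain C where "\<And>\<omega>. \<omega> \<in> paths T \<Longrightarrow> \<bar>X \<omega>\<bar> \<le> C" using lip_cyl_bounded[OF assms(3)] by blast
  then show ?thesis
    by (intro integrable_const_bound[of _ C])
       (use Pset_prob[OF assms(1)] lip_cyl_measurable_Pset[OF assms] in auto)
qed

lemma L1G_integrable: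
  assumes Q: "Q \<in> Pset" and s: "s \<le> T" and X: "X \<in> L1G Pset T s"
  shows "integrable Q X"
proof -
  obtain Xn where Xn: "\<And>n. lip_cyl T s (Xn n)" "(\<lambda>n. Ehat_abs Pset (\<lambda>\<omega>. X \<omega> - Xn n \<omega>)) \<longlonglongrightarrow> 0"
    using X unfolding L1G_def by blast
  obtain n where n: "Ehat_abs Pset (\<lambda>\<omega>. X \<omega> - Xn n \<omega>) < 1"
    using order_tendstoD(2)[OF Xn(2), of 1] by (auto simp: eventually_sequentially)
  have "(\<integral>\<^sup>+\<omega>. ennreal (norm (X \<omega> - Xn n \<omega>)) \<partial>Q) \<le> Ehat_abs Pset (\<lambda>\<omega>. X \<omega> - Xn n \<omega>)"
    unfolding Ehat_abs_def using Q by (simp only: real_norm_def) (rule SUP_upper)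
  also have "\<dots> < \<infinity>" using n by (rule order.strict_trans) simp
  finally have "integrable Q (\<lambda>\<omega>. X \<omega> - Xn n \<omega>)"
    using L1G_measurable_Pset[OF Q s X] lip_cyl_measurable_Pset[OF Q s Xn(1)]
    by (intro integrableI_bounded) auto
  then have "integrable Q (\<lambda>\<omega>. (X \<omega> - Xn n \<omega>) + Xn n \<omega>)"
    using lip_cyl_integrable[OF Q s Xn(1)] by (rule Bochner_Integration.integrable_add)
  then show ?thesis by simp
qed

lemma lip_cyl_in_L1G:
  assumes "lip_cyl T s X" shows "X \<in> L1G Pset T s"
proof -
  have "Ehat_abs Pset (\<lambda>\<omega>. X \<omega> - X \<omega>) = 0"
    unfolding Ehat_abs_def by (cases "Pset = {}") (auto simp: bot_ennreal)
  then show ?thesis unfolding L1G_def using assms lip_cyl_measurable[OF assms]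
    by (intro CollectI conjI exI[of _ "\<lambda>_. X"]) auto
qed

lemma L1G_const: "0 \<le> s \<Longrightarrow> (\<lambda>_. c) \<in> L1G Pset T s"
  by (rule lip_cyl_in_L1G[OF lip_cyl_const])

lemma L1G_mono:
  assumes "s \<le> s'" "X \<in> L1G Pset T s" shows "X \<in> L1G Pset T s'"
proof -
  have "X \<in> borel_measurable (filt T s')"
    using assms sets_filt_mono[OF assms(1), of T]
    by (intro measurable_from_subalg[OF _ L1G_measurable]) (auto simp: subalgebra_def)
  then show ?thesis using assms(2) lip_cyl_mono[OF assms(1)] unfolding L1G_def by blast
qed

lemma L1G_combine:
  assumes s: "s \<le> T" and X: "X \<in> L1G Pset T s" and Y: "Y \<in> L1G Pset T s"
    and H: "H \<in> borel_measurable (filt T s)"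
    and F: "\<And>X' Y'. lip_cyl T s X' \<Longrightarrow> lip_cyl T s Y' \<Longrightarrow> lip_cyl T s (F X' Y')"
    and H_F: "\<And>X' Y' \<omega>. \<bar>H \<omega> - F X' Y' \<omega>\<bar> \<le> \<bar>X \<omega> - X' \<omega>\<bar> + \<bar>Y \<omega> - Y' \<omega>\<bar>"
  shows "H \<in> L1G Pset T s"
proof -
  obtain Xn where Xn: "\<And>n. lip_cyl T s (Xn n)" "(\<lambda>n. Ehat_abs Pset (\<lambda>\<omega>. X \<omega> - Xn n \<omega>)) \<longlonglongrightarrow> 0"
    using X unfolding L1G_def by blast
  obtain Yn where Yn: "\<And>n. lip_cyl T s (Yn n)" "(\<lambda>n. Ehat_abs Pset (\<lambda>\<omega>. Y \<omega> - Yn n \<omega>)) \<longlonglongrightarrow> 0"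
    using Y unfolding L1G_def by blast
  have "Ehat_abs Pset (\<lambda>\<omega>. H \<omega> - F (Xn n) (Yn n) \<omega>)
      \<le> Ehat_abs Pset (\<lambda>\<omega>. X \<omega> - Xn n \<omega>) + Ehat_abs Pset (\<lambda>\<omega>. Y \<omega> - Yn n \<omega>)" (is "?d n \<le> ?b n") for n
  proof (rule Ehat_abs_le_add[OF H_F])
    fix Q assume Q: "Q \<in> Pset"
    show "(\<lambda>\<omega>. X \<omega> - Xn n \<omega>) \<in> borel_measurable Q \<and> (\<lambda>\<omega>. Y \<omega> - Yn n \<omega>) \<in> borel_measurable Q"
      using L1G_measurable_Pset[OF Q s X] lip_cyl_measurable_Pset[OF Q s Xn(1)]
        L1G_measurable_Pset[OF Q s Y] lip_cyl_measurable_Pset[OF Q s Yn(1)] by auto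
  qed
  moreover have "?b \<longlonglongrightarrow> 0"
    using tendsto_add[OF Xn(2) Yn(2)] by simp
  ultimately have "?d \<longlonglongrightarrow> 0"
    by (intro tendsto_sandwich[where f = "\<lambda>_. 0" and g = ?d and h = ?b] always_eventually) auto
  then show ?thesis unfolding L1G_def using H F[OF Xn(1) Yn(1)]
    by (intro CollectI conjI exI[of _ "\<lambda>n. F (Xn n) (Yn n)"]) auto
qed

lemma L1G_add:
  assumes "s \<le> T" "X \<in> L1G Pset T s" "Y \<in> L1G Pset T s"
  shows "(\<lambda>\<omega>. X \<omega> + Y \<omega>) \<in> L1G Pset T s"
proof (rule L1G_combine[OF assms, where F = "\<lambda>X' Y' \<omega>. X' \<omega> + Y' \<omega>"])
  show "(\<lambda>\<omega>. X \<omega> + Y \<omega>) \<in> borel_measurable (filt T s)"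
    using L1G_measurable[OF assms(2)] L1G_measurable[OF assms(3)] by measurable
qed (auto intro: lip_cyl_add)

lemma L1G_uminus:
  assumes "0 \<le> s" "X \<in> L1G Pset T s"
  shows "(\<lambda>\<omega>. - X \<omega>) \<in> L1G Pset T s"
proof -
  obtain Xn where "\<And>n. lip_cyl T s (Xn n)" "(\<lambda>n. Ehat_abs Pset (\<lambda>\<omega>. X \<omega> - Xn n \<omega>)) \<longlonglongrightarrow> 0"
    using assms(2) unfolding L1G_def by blast
  moreover have "Ehat_abs Pset (\<lambda>\<omega>. - X \<omega> - - Xn n \<omega>) = Ehat_abs Pset (\<lambda>\<omega>. X \<omega> - Xn n \<omega>)" for n
    unfolding Ehat_abs_def by (simp add: abs_minus_commute)
  ultimately show ?thesis unfolding L1G_def using L1G_measurable[OF assms(2)] lip_cyl_uminus[OF assms(1)]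
    by (intro CollectI conjI exI[of _ "\<lambda>n \<omega>. - Xn n \<omega>"]) auto
qed

lemma L1G_convex_comb:
  assumes s: "0 \<le> s" "s \<le> T" and w: "lip_cyl T s w" "\<And>\<omega>. 0 \<le> w \<omega> \<and> w \<omega> \<le> 1"
    and X: "X \<in> L1G Pset T T" and Y: "Y \<in> L1G Pset T T"
  shows "(\<lambda>\<omega>. w \<omega> * X \<omega> + (1 - w \<omega>) * Y \<omega>) \<in> L1G Pset T T"
proof (rule L1G_combine[OF order_refl X Y, where F = "\<lambda>X' Y' \<omega>. w \<omega> * X' \<omega> + (1 - w \<omega>) * Y' \<omega>"])
  have wT: "lip_cyl T T w" using lip_cyl_mono[OF s(2) w(1)] .
  show "(\<lambda>\<omega>. w \<omega> * X \<omega> + (1 - w \<omega>) * Y \<omega>) \<in> borel_measurable (filt T T)"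
    using L1G_measurable[OF X] L1G_measurable[OF Y] lip_cyl_measurable[OF wT] by measurable
  show "lip_cyl T T (\<lambda>\<omega>. w \<omega> * X' \<omega> + (1 - w \<omega>) * Y' \<omega>)" if "lip_cyl T T X'" "lip_cyl T T Y'" for X' Y'
    using s by (intro lip_cyl_add lip_cyl_mult lip_cyl_one_minus wT that) auto
  fix X' Y' :: "(real \<Rightarrow> 'd) \<Rightarrow> real" and \<omega>
  have "\<bar>(w \<omega> * X \<omega> + (1 - w \<omega>) * Y \<omega>) - (w \<omega> * X' \<omega> + (1 - w \<omega>) * Y' \<omega>)\<bar>
      = \<bar>w \<omega> * (X \<omega> - X' \<omega>) + (1 - w \<omega>) * (Y \<omega> - Y' \<omega>)\<bar>" by (simp add: algebra_simps)
  also have "\<dots> \<le> \<bar>w \<omega>\<bar> * \<bar>X \<omega> - X' \<omega>\<bar> + \<bar>1 - w \<omega>\<bar> * \<bar>Y \<omega> - Y' \<omega>\<bar>"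
    by (metis abs_mult abs_triangle_ineq)
  also have "\<dots> \<le> 1 * \<bar>X \<omega> - X' \<omega>\<bar> + 1 * \<bar>Y \<omega> - Y' \<omega>\<bar>"
    using w(2)[of \<omega>] by (intro add_mono mult_right_mono) auto
  finally show "\<bar>(w \<omega> * X \<omega> + (1 - w \<omega>) * Y \<omega>) - (w \<omega> * X' \<omega> + (1 - w \<omega>) * Y' \<omega>)\<bar>
      \<le> \<bar>X \<omega> - X' \<omega>\<bar> + \<bar>Y \<omega> - Y' \<omega>\<bar>" by simp
qed

end

section \<open>Approximating \<open>\<F>\<^sub>t\<close>-events by cylinder weights\<close>

definition weights :: "real \<Rightarrow> real \<Rightarrow> ((real \<Rightarrow> 'd::euclidean_space) \<Rightarrow> real) set" where
  "weights T t = {w. lip_cyl T t w \<and> (\<forall>\<omega>. 0 \<le> w \<omega> \<and> w \<omega> \<le> 1)}"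

definition weighted_L1_dist :: "'a measure \<Rightarrow> ('a \<Rightarrow> real) \<Rightarrow> ('a \<Rightarrow> real) \<Rightarrow> ('a \<Rightarrow> real) \<Rightarrow> real" where
  "weighted_L1_dist P h u v = (\<integral>\<omega>. \<bar>u \<omega> - v \<omega>\<bar> * h \<omega> \<partial>P)"

definition weight_approximable :: "(real \<Rightarrow> 'd::euclidean_space) measure \<Rightarrow> ((real \<Rightarrow> 'd) \<Rightarrow> real)
    \<Rightarrow> real \<Rightarrow> real \<Rightarrow> (real \<Rightarrow> 'd) set \<Rightarrow> bool" where
  "weight_approximable P h T t A \<longleftrightarrow> (\<forall>e>0. \<exists>w\<in>weights T t. weighted_L1_dist P h (indicator A) w < e)"

lemma weights_const: "0 \<le> t \<Longrightarrow> 0 \<le> c \<Longrightarrow> c \<le> 1 \<Longrightarrow> (\<lambda>_. c) \<in> weights T t"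
  unfolding weights_def using lip_cyl_const by auto

lemma weights_one_minus: "0 \<le> t \<Longrightarrow> w \<in> weights T t \<Longrightarrow> (\<lambda>\<omega>. 1 - w \<omega>) \<in> weights T t"
  unfolding weights_def using lip_cyl_one_minus by auto

lemma weights_mult: "w \<in> weights T t \<Longrightarrow> v \<in> weights T t \<Longrightarrow> (\<lambda>\<omega>. w \<omega> * v \<omega>) \<in> weights T t"
  unfolding weights_def using lip_cyl_mult[of T t w v] by (auto intro: mult_le_one)

lemma abs_diff_unit_interval_le_1:
  "0 \<le> x \<and> x \<le> 1 \<Longrightarrow> 0 \<le> y \<and> y \<le> 1 \<Longrightarrow> \<bar>x - y\<bar> \<le> (1::real)"
  by auto

lemma indicator_unit_interval: "0 \<le> (indicator S \<omega> :: real) \<and> (indicator S \<omega> :: real) \<le> 1"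
  by (auto simp: indicator_def)

lemma integrable_bounded_mult:
  fixes X w :: "'a \<Rightarrow> real"
  assumes "integrable P X" "w \<in> borel_measurable P" "\<And>\<omega>. \<bar>w \<omega>\<bar> \<le> 1"
  shows "integrable P (\<lambda>\<omega>. w \<omega> * X \<omega>)"
proof (rule Bochner_Integration.integrable_bound[OF assms(1)])
  show "(\<lambda>\<omega>. w \<omega> * X \<omega>) \<in> borel_measurable P" using assms by measurable
  show "AE \<omega> in P. norm (w \<omega> * X \<omega>) \<le> norm (X \<omega>)"
    using assms(3) by (auto simp: abs_mult intro!: mult_left_le_one_le)
qed

context
  fixes P :: "(real \<Rightarrow> 'd::euclidean_space) measure" and T t :: real and h :: "(real \<Rightarrow> 'd) \<Rightarrow> real"
  assumes space_P: "space P = paths T" and sets_P: "sets P = sets (filt T T)"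
    and t: "0 \<le> t" "t \<le> T"
    and h: "integrable P h" "\<And>\<omega>. 0 \<le> h \<omega>"
begin

lemma weights_measurable: "w \<in> weights T t \<Longrightarrow> w \<in> borel_measurable P"
  unfolding weights_def using space_P sets_P t
  by (blast intro: measurable_from_subalg subalgebra_filt lip_cyl_measurable)

lemma filt_sets_P: "A \<in> sets (filt T t) \<Longrightarrow> A \<in> sets P"
  using sets_filt_mono[OF t(2), of T] sets_P by auto

lemma integrable_abs_diff_mult_h:
  assumes "u \<in> borel_measurable P" "v \<in> borel_measurable P" "\<And>\<omega>. \<bar>u \<omega> - v \<omega>\<bar> \<le> 1"
  shows "integrable P (\<lambda>\<omega>. \<bar>u \<omega> - v \<omega>\<bar> * h \<omega>)"
  using integrable_bounded_mult[OF h(1), of "\<lambda>\<omega>. \<bar>u \<omega> - v \<omega>\<bar>"] assms by simp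

lemma weighted_L1_dist_triangle:
  assumes "a \<in> borel_measurable P" "b \<in> borel_measurable P" "c \<in> borel_measurable P"
    and "\<And>\<omega>. 0 \<le> a \<omega> \<and> a \<omega> \<le> 1" "\<And>\<omega>. 0 \<le> b \<omega> \<and> b \<omega> \<le> 1" "\<And>\<omega>. 0 \<le> c \<omega> \<and> c \<omega> \<le> 1"
  shows "weighted_L1_dist P h a c \<le> weighted_L1_dist P h a b + weighted_L1_dist P h b c"
proof -
  have i: "integrable P (\<lambda>\<omega>. \<bar>a \<omega> - c \<omega>\<bar> * h \<omega>)" "integrable P (\<lambda>\<omega>. \<bar>a \<omega> - b \<omega>\<bar> * h \<omega>)"
      "integrable P (\<lambda>\<omega>. \<bar>b \<omega> - c \<omega>\<bar> * h \<omega>)"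
    using assms by (auto intro!: integrable_abs_diff_mult_h abs_diff_unit_interval_le_1)
  have "(\<integral>\<omega>. \<bar>a \<omega> - c \<omega>\<bar> * h \<omega> \<partial>P) \<le> (\<integral>\<omega>. \<bar>a \<omega> - b \<omega>\<bar> * h \<omega> + \<bar>b \<omega> - c \<omega>\<bar> * h \<omega> \<partial>P)"
    using h(2) i by (intro integral_mono Bochner_Integration.integrable_add)
      (auto simp flip: distrib_right intro!: mult_right_mono)
  then show ?thesis unfolding weighted_L1_dist_def
    by (simp add: Bochner_Integration.integral_add[OF i(2,3)])
qed

lemma weighted_L1_dist_tendsto_0:
  assumes A: "A \<in> sets P" and u: "\<And>k. u k \<in> borel_measurable P" "\<And>k \<omega>. 0 \<le> u k \<omega> \<and> u k \<omega> \<le> 1"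
    and lim: "\<And>\<omega>. \<omega> \<in> space P \<Longrightarrow> eventually (\<lambda>k. u k \<omega> = indicator A \<omega>) sequentially"
  shows "(\<lambda>k. weighted_L1_dist P h (indicator A) (u k)) \<longlonglongrightarrow> 0"
proof -
  have "(\<lambda>k. \<integral>\<omega>. \<bar>indicator A \<omega> - u k \<omega>\<bar> * h \<omega> \<partial>P) \<longlonglongrightarrow> (\<integral>\<omega>. 0 \<partial>P)"
  proof (rule integral_dominated_convergence[where w = h])
    show "(\<lambda>\<omega>. \<bar>indicator A \<omega> - u k \<omega>\<bar> * h \<omega>) \<in> borel_measurable P" for k
      using A u(1) h(1) by measurable
    show "AE \<omega> in P. (\<lambda>k. \<bar>indicator A \<omega> - u k \<omega>\<bar> * h \<omega>) \<longlonglongrightarrow> 0"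
    proof (rule AE_I2)
      fix \<omega> assume "\<omega> \<in> space P"
      from lim[OF this] have "eventually (\<lambda>k. \<bar>indicator A \<omega> - u k \<omega>\<bar> * h \<omega> = 0) sequentially"
        by (rule eventually_mono) simp
      then show "(\<lambda>k. \<bar>indicator A \<omega> - u k \<omega>\<bar> * h \<omega>) \<longlonglongrightarrow> 0" by (rule tendsto_eventually)
    qed
    show "AE \<omega> in P. norm (\<bar>indicator A \<omega> - u k \<omega>\<bar> * h \<omega>) \<le> h \<omega>" for k
    proof (rule AE_I2)
      fix \<omega>
      have "\<bar>indicator A \<omega> - u k \<omega>\<bar> \<le> 1"
        using u(2) by (intro abs_diff_unit_interval_le_1 indicator_unit_interval) auto
      then show "norm (\<bar>indicator A \<omega> - u k \<omega>\<bar> * h \<omega>) \<le> h \<omega>"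
        using h(2)[of \<omega>] by (simp add: abs_mult mult_left_le_one_le)
    qed
  qed (use h(1) in auto)
  then show ?thesis unfolding weighted_L1_dist_def by simp
qed

lemma weight_approximable_if_tendsto:
  assumes "A \<in> sets P" "\<And>k. w k \<in> weights T t"
    and "\<And>\<omega>. \<omega> \<in> space P \<Longrightarrow> eventually (\<lambda>k. w k \<omega> = indicator A \<omega>) sequentially"
  shows "weight_approximable P h T t A"
  unfolding weight_approximable_def
proof (intro allI impI)
  fix e :: real assume e: "0 < e"
  have "(\<lambda>k. weighted_L1_dist P h (indicator A) (w k)) \<longlonglongrightarrow> 0"
    using assms weights_measurable by (intro weighted_L1_dist_tendsto_0) (auto simp: weights_def)
  from order_tendstoD(2)[OF this e] obtain k where "weighted_L1_dist P h (indicator A) (w k) < e"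
    by (auto simp: eventually_sequentially)
  then show "\<exists>w\<in>weights T t. weighted_L1_dist P h (indicator A) w < e" using assms(2) by blast
qed

lemma weight_approximable_empty: "weight_approximable P h T t {}"
  unfolding weight_approximable_def weighted_L1_dist_def
  using weights_const[OF t(1), of 0] by (auto intro!: bexI[of _ "\<lambda>_. 0"])

lemma weight_approximable_compl:
  assumes "weight_approximable P h T t A" shows "weight_approximable P h T t (paths T - A)"
  unfolding weight_approximable_def
proof (intro allI impI)
  fix e :: real assume "0 < e"
  then obtain w where w: "w \<in> weights T t" "weighted_L1_dist P h (indicator A) w < e"
    using assms unfolding weight_approximable_def by blast
  have "weighted_L1_dist P h (indicator (paths T - A)) (\<lambda>\<omega>. 1 - w \<omega>) = weighted_L1_dist P h (indicator A) w"
    unfolding weighted_L1_dist_def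
    by (intro Bochner_Integration.integral_cong) (auto simp: space_P indicator_def)
  then show "\<exists>w\<in>weights T t. weighted_L1_dist P h (indicator (paths T - A)) w < e"
    using w weights_one_minus[OF t(1) w(1)] by (intro bexI[of _ "\<lambda>\<omega>. 1 - w \<omega>"]) auto
qed

lemma weight_approximable_Int:
  assumes A: "A \<in> sets P" "weight_approximable P h T t A" and B: "B \<in> sets P" "weight_approximable P h T t B"
  shows "weight_approximable P h T t (A \<inter> B)"
  unfolding weight_approximable_def
proof (intro allI impI)
  fix e :: real assume "0 < e"
  then obtain w v where w: "w \<in> weights T t" "weighted_L1_dist P h (indicator A) w < e / 2"
    and v: "v \<in> weights T t" "weighted_L1_dist P h (indicator B) v < e / 2"
    using A(2) B(2) unfolding weight_approximable_def by (meson half_gt_zero)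
  have w01: "\<And>\<omega>. 0 \<le> w \<omega> \<and> w \<omega> \<le> 1" and v01: "\<And>\<omega>. 0 \<le> v \<omega> \<and> v \<omega> \<le> 1"
    using w(1) v(1) unfolding weights_def by auto
  have i: "integrable P (\<lambda>\<omega>. \<bar>indicator A \<omega> - w \<omega>\<bar> * h \<omega>)" "integrable P (\<lambda>\<omega>. \<bar>indicator B \<omega> - v \<omega>\<bar> * h \<omega>)"
      "integrable P (\<lambda>\<omega>. \<bar>indicator (A \<inter> B) \<omega> - w \<omega> * v \<omega>\<bar> * h \<omega>)"
    using weights_measurable[OF w(1)] weights_measurable[OF v(1)] w01 v01 A(1) B(1)
    by (auto intro!: integrable_abs_diff_mult_h abs_diff_unit_interval_le_1 indicator_unit_interval
        mult_le_one)
  have pointwise: "\<bar>indicator (A \<inter> B) \<omega> - w \<omega> * v \<omega>\<bar> \<le> \<bar>indicator A \<omega> - w \<omega>\<bar> + \<bar>indicator B \<omega> - v \<omega>\<bar>"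
    for \<omega> :: "real \<Rightarrow> 'd"
  proof -
    have "indicator (A \<inter> B) \<omega> - w \<omega> * v \<omega>
        = indicator A \<omega> * (indicator B \<omega> - v \<omega>) + v \<omega> * (indicator A \<omega> - w \<omega>)"
      by (simp add: indicator_def algebra_simps)
    also have "\<bar>\<dots>\<bar> \<le> \<bar>indicator A \<omega>\<bar> * \<bar>indicator B \<omega> - v \<omega>\<bar> + \<bar>v \<omega>\<bar> * \<bar>indicator A \<omega> - w \<omega>\<bar>"
      by (metis abs_mult abs_triangle_ineq)
    also have "\<dots> \<le> 1 * \<bar>indicator B \<omega> - v \<omega>\<bar> + 1 * \<bar>indicator A \<omega> - w \<omega>\<bar>"
      using v01[of \<omega>] by (intro add_mono mult_right_mono) (auto simp: indicator_def)
    finally show ?thesis by simp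
  qed
  have "weighted_L1_dist P h (indicator (A \<inter> B)) (\<lambda>\<omega>. w \<omega> * v \<omega>)
      \<le> (\<integral>\<omega>. \<bar>indicator A \<omega> - w \<omega>\<bar> * h \<omega> + \<bar>indicator B \<omega> - v \<omega>\<bar> * h \<omega> \<partial>P)"
    unfolding weighted_L1_dist_def using i h(2)
    by (intro integral_mono Bochner_Integration.integrable_add)
      (auto simp flip: distrib_right intro!: mult_right_mono pointwise)
  also have "\<dots> = weighted_L1_dist P h (indicator A) w + weighted_L1_dist P h (indicator B) v"
    unfolding weighted_L1_dist_def by (rule Bochner_Integration.integral_add[OF i(1,2)])
  finally show "\<exists>w\<in>weights T t. weighted_L1_dist P h (indicator (A \<inter> B)) w < e"
    using w v weights_mult[OF w(1) v(1)] by (intro bexI[of _ "\<lambda>\<omega>. w \<omega> * v \<omega>"]) auto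
qed

lemma weight_approximable_Un:
  assumes A: "A \<in> sets P" "weight_approximable P h T t A" and B: "B \<in> sets P" "weight_approximable P h T t B"
  shows "weight_approximable P h T t (A \<union> B)"
proof -
  have "A \<union> B = paths T - ((paths T - A) \<inter> (paths T - B))"
    using A(1) B(1) sets.sets_into_space space_P by auto
  moreover have "weight_approximable P h T t (paths T - ((paths T - A) \<inter> (paths T - B)))"
    using A B by (intro weight_approximable_compl weight_approximable_Int) (auto simp flip: space_P)
  ultimately show ?thesis by simp
qed

lemma weight_approximable_UN:
  fixes A :: "nat \<Rightarrow> (real \<Rightarrow> 'd) set"
  assumes A: "\<And>i. A i \<in> sets P" "\<And>i. weight_approximable P h T t (A i)"
  shows "weight_approximable P h T t (\<Union>i. A i)"
  unfolding weight_approximable_def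
proof (intro allI impI)
  fix e :: real assume e: "0 < e"
  have B: "(\<Union>i<n. A i) \<in> sets P" for n using A(1) by auto
  have B_approx: "weight_approximable P h T t (\<Union>i<n. A i)" for n
  proof (induction n)
    case (Suc n)
    have "(\<Union>i<Suc n. A i) = (\<Union>i<n. A i) \<union> A n" by (auto simp: lessThan_Suc)
    then show ?case using Suc A B by (simp add: weight_approximable_Un)
  qed (simp add: weight_approximable_empty)
  have "(\<lambda>n. weighted_L1_dist P h (indicator (\<Union>i. A i)) (indicator (\<Union>i<n. A i))) \<longlonglongrightarrow> 0"
  proof (rule weighted_L1_dist_tendsto_0)
    show "eventually (\<lambda>n. indicator (\<Union>i<n. A i) \<omega> = indicator (\<Union>i. A i) \<omega>) sequentially" for \<omega>
    proof (cases "\<omega> \<in> (\<Union>i. A i)")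
      case True
      then obtain i where "\<omega> \<in> A i" by auto
      then show ?thesis unfolding eventually_sequentially using True
        by (intro exI[of _ "Suc i"]) (auto simp: indicator_def)
    qed (auto simp: indicator_def)
  qed (use A(1) B in \<open>auto simp: indicator_def\<close>)
  from order_tendstoD(2)[OF this half_gt_zero[OF e]] obtain N
    where N: "weighted_L1_dist P h (indicator (\<Union>i. A i)) (indicator (\<Union>i<N. A i)) < e / 2"
    by (auto simp: eventually_sequentially)
  obtain w where w: "w \<in> weights T t" "weighted_L1_dist P h (indicator (\<Union>i<N. A i)) w < e / 2"
    using B_approx[of N] e unfolding weight_approximable_def by (meson half_gt_zero)
  have "weighted_L1_dist P h (indicator (\<Union>i. A i)) w
      \<le> weighted_L1_dist P h (indicator (\<Union>i. A i)) (indicator (\<Union>i<N. A i))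
        + weighted_L1_dist P h (indicator (\<Union>i<N. A i)) w"
    using A(1) B weights_measurable[OF w(1)] w(1)
    by (intro weighted_L1_dist_triangle) (auto simp: weights_def indicator_def)
  then show "\<exists>w\<in>weights T t. weighted_L1_dist P h (indicator (\<Union>i. A i)) w < e"
    using N w by (intro bexI[of _ w]) auto
qed

text \<open>The weights \<open>min 1 (k \<cdot> infdist (\<omega> s) (- U))\<close> increase to the indicator of
  \<open>\<omega> s \<in> U\<close>, for \<open>U\<close> open.\<close>

lemma weight_approximable_coord_event:
  assumes s: "s \<in> {0..t}" and U: "open U"
  shows "weight_approximable P h T t {\<omega> \<in> paths T. \<omega> s \<in> U}"
proof (cases "U = UNIV")
  case True
  then show ?thesis using weight_approximable_compl[OF weight_approximable_empty] by simp
next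
  case False
  define w where "w k \<omega> = min 1 (real k * infdist (\<omega> s) (- U))" for k :: nat and \<omega> :: "real \<Rightarrow> 'd"
  have lip: "lip_bounded 1 (\<lambda>xs. min 1 (real k * infdist (hd xs) (- U))) (real k) 1" for k
    by (rule lip_bounded_min_infdist) simp
  have "lip_cyl T t (w k)" for k
    unfolding lip_cyl_iff_lip_bounded using s lip[of k]
    by (intro exI[of _ "[s]"] exI[of _ "\<lambda>xs. min 1 (real k * infdist (hd xs) (- U))"] exI[of _ "real k"]
        exI[of _ 1]) (auto simp: w_def)
  then have wW: "w k \<in> weights T t" for k
    unfolding weights_def w_def by (auto simp: infdist_nonneg)
  show ?thesis
  proof (rule weight_approximable_if_tendsto[OF _ wW])
    show "{\<omega> \<in> paths T. \<omega> s \<in> U} \<in> sets P"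
      using s U by (intro filt_sets_P) (auto simp: sets_filt coord_events_def)
    fix \<omega> assume \<omega>: "\<omega> \<in> space P"
    show "eventually (\<lambda>k. w k \<omega> = indicator {\<omega> \<in> paths T. \<omega> s \<in> U} \<omega>) sequentially"
    proof (cases "\<omega> s \<in> U")
      case True
      then have d: "0 < infdist (\<omega> s) (- U)"
        using infdist_pos_not_in_closed[of "- U" "\<omega> s"] U False by auto
      obtain K :: nat where K: "1 / infdist (\<omega> s) (- U) < K" using reals_Archimedean2 by blast
      have "w k \<omega> = 1" if "K \<le> k" for k
      proof -
        have "1 < real K * infdist (\<omega> s) (- U)" using K d by (simp add: field_simps)
        also have "\<dots> \<le> real k * infdist (\<omega> s) (- U)" using that d by (intro mult_right_mono) auto
        finally show ?thesis unfolding w_def by simp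
      qed
      then show ?thesis using True \<omega> space_P unfolding eventually_sequentially by auto
    qed (simp add: w_def)
  qed
qed

text \<open>Weight-approximable sets form a \<sigma>-algebra containing the generators of \<open>filt T t\<close>.\<close>

lemma weight_approximable_filt:
  assumes "A \<in> sets (filt T t)" shows "weight_approximable P h T t A"
proof -
  define \<A> where "\<A> = {A \<in> sets (filt T t). weight_approximable P h T t A}"
  have "sigma_algebra (paths T) \<A>"
    unfolding sigma_algebra_iff2
  proof (intro conjI ballI allI impI)
    show "\<A> \<subseteq> Pow (paths T)" unfolding \<A>_def using sets.sets_into_space[of _ "filt T t"] by auto
    show "{} \<in> \<A>" unfolding \<A>_def using weight_approximable_empty by auto
    show "paths T - A \<in> \<A>" if "A \<in> \<A>" for A
      using that weight_approximable_compl sets.compl_sets[of A "filt T t"] unfolding \<A>_def by auto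
    show "(\<Union>i. A i) \<in> \<A>" if "range A \<subseteq> \<A>" for A :: "nat \<Rightarrow> _"
    proof -
      have "A i \<in> sets (filt T t)" "weight_approximable P h T t (A i)" for i
        using that unfolding \<A>_def by auto
      then show ?thesis unfolding \<A>_def using weight_approximable_UN filt_sets_P by auto
    qed
  qed
  moreover have "coord_events T t \<subseteq> \<A>"
    unfolding \<A>_def sets_filt coord_events_def
    using weight_approximable_coord_event by auto
  ultimately have "sigma_sets (paths T) (coord_events T t) \<subseteq> \<A>"
    by (rule sigma_algebra.sigma_sets_subset)
  then show ?thesis using assms unfolding sets_filt \<A>_def by auto
qed

end

section \<open>Essential suprema as countable suprema\<close>

lemma integral_SUP_maximiser_exists:
  fixes h :: "'i \<Rightarrow> 'a \<Rightarrow> ennreal"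
  assumes N: "prob_space N" and I: "I \<noteq> {}"
  shows "\<exists>z :: nat \<Rightarrow> 'i. range z \<subseteq> I \<and> (\<forall>z' :: nat \<Rightarrow> 'i. range z' \<subseteq> I \<longrightarrow>
            (\<integral>\<^sup>+\<omega>. (SUP n. h (z' n) \<omega>) \<partial>N) \<le> (\<integral>\<^sup>+\<omega>. (SUP n. h (z n) \<omega>) \<partial>N))"
proof -
  define V where "V z = (\<integral>\<^sup>+\<omega>. (SUP n. h (z n) \<omega>) \<partial>N)" for z :: "nat \<Rightarrow> 'i"
  define Zs where "Zs = {z :: nat \<Rightarrow> 'i. range z \<subseteq> I}"
  obtain i0 where "i0 \<in> I" using I by blast
  then have "V ` Zs \<noteq> {}" unfolding Zs_def by (auto intro!: exI[of _ "\<lambda>_. i0"])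
  from ennreal_Sup_countable_SUP[OF this] obtain g :: "nat \<Rightarrow> ennreal"
    where g: "range g \<subseteq> V ` Zs" "Sup (V ` Zs) = (SUP k. g k)" by blast
  have "\<forall>k. \<exists>y. y \<in> Zs \<and> V y = g k" using g(1) by (metis image_iff range_subsetD)
  then obtain y where y: "\<And>k. y k \<in> Zs" "\<And>k. V (y k) = g k" by metis
  text \<open>Interleave the countably many sequences \<open>y k\<close> into one.\<close>
  define z where "z n = (case prod_decode n of (k, m) \<Rightarrow> y k m)" for n
  have z: "z \<in> Zs" using y(1) unfolding Zs_def z_def by (auto split: prod.splits simp: image_subset_iff)
  have yz: "y k m = z (prod_encode (k, m))" for k m unfolding z_def by simp
  have "(SUP m. h (y k m) \<omega>) \<le> (SUP n. h (z n) \<omega>)" for k \<omega>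
    by (intro SUP_least) (metis SUP_upper UNIV_I yz)
  then have "V (y k) \<le> V z" for k unfolding V_def by (intro nn_integral_mono) auto
  then have Sup_le: "Sup (V ` Zs) \<le> V z" unfolding g(2) y(2)[symmetric] by (intro SUP_least) auto
  have max: "V z' \<le> V z" if "z' \<in> Zs" for z'
  proof -
    have "V z' \<le> Sup (V ` Zs)" using that by (rule SUP_upper)
    then show ?thesis using Sup_le by (rule order_trans)
  qed
  have "range z \<subseteq> I \<and> (\<forall>z' :: nat \<Rightarrow> 'i. range z' \<subseteq> I \<longrightarrow> V z' \<le> V z)"
    using z max unfolding Zs_def by blast
  then show ?thesis unfolding V_def by (rule exI[of _ z])
qed

text \<open>A sequence maximising the integral of the pointwise supremum dominates every member a.e.\<close>

lemma bounded_family_dominating_sequence: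
  fixes h :: "'i \<Rightarrow> 'a \<Rightarrow> ennreal"
  assumes N: "prob_space N" and I: "I \<noteq> {}"
    and h: "\<And>i. i \<in> I \<Longrightarrow> h i \<in> borel_measurable N" "\<And>i \<omega>. h i \<omega> \<le> ennreal c"
  shows "\<exists>z :: nat \<Rightarrow> 'i. range z \<subseteq> I \<and> (\<forall>i\<in>I. AE \<omega> in N. h i \<omega> \<le> (SUP n. h (z n) \<omega>))"
proof -
  interpret prob_space N by (rule N)
  obtain z :: "nat \<Rightarrow> 'i" where z: "range z \<subseteq> I" and max: "\<And>z' :: nat \<Rightarrow> 'i. range z' \<subseteq> I \<Longrightarrow>
      (\<integral>\<^sup>+\<omega>. (SUP n. h (z' n) \<omega>) \<partial>N) \<le> (\<integral>\<^sup>+\<omega>. (SUP n. h (z n) \<omega>) \<partial>N)"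
    using integral_SUP_maximiser_exists[OF N I, of h] by blast
  define H where "H z \<omega> = (SUP n. h (z n) \<omega>)" for z :: "nat \<Rightarrow> 'i" and \<omega>
  have H_meas: "range z' \<subseteq> I \<Longrightarrow> H z' \<in> borel_measurable N" for z' :: "nat \<Rightarrow> 'i"
    unfolding H_def using h(1) by (intro borel_measurable_SUP) auto
  have "AE \<omega> in N. h i \<omega> \<le> H z \<omega>" if i: "i \<in> I" for i
  proof -
    define z' where "z' = case_nat i z"
    have z': "range z' \<subseteq> I" using z i unfolding z'_def by (auto split: nat.splits simp: image_subset_iff)
    have H_le: "H z \<omega> \<le> H z' \<omega>" for \<omega>
      unfolding H_def z'_def by (intro SUP_least) (metis SUP_upper UNIV_I old.nat.simps(5))
    have h_le: "h i \<omega> \<le> H z' \<omega>" for \<omega>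
      unfolding H_def z'_def by (metis SUP_upper UNIV_I old.nat.simps(4))
    have fin: "(\<integral>\<^sup>+\<omega>. H z \<omega> \<partial>N) \<noteq> \<infinity>"
    proof -
      have "(\<integral>\<^sup>+\<omega>. H z \<omega> \<partial>N) \<le> (\<integral>\<^sup>+\<omega>. ennreal c \<partial>N)"
        unfolding H_def using h(2) by (intro nn_integral_mono SUP_least) auto
      then have "(\<integral>\<^sup>+\<omega>. H z \<omega> \<partial>N) \<le> ennreal c" by (simp add: emeasure_space_1)
      then show ?thesis using ennreal_less_top[of c] by (auto simp: top_unique)
    qed
    have eq: "(\<integral>\<^sup>+\<omega>. H z' \<omega> \<partial>N) = (\<integral>\<^sup>+\<omega>. H z \<omega> \<partial>N)"
      using max[OF z', folded H_def] nn_integral_mono[of N "H z" "H z'", OF H_le] by (rule antisym)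
    have "(\<integral>\<^sup>+\<omega>. H z' \<omega> - H z \<omega> \<partial>N) = (\<integral>\<^sup>+\<omega>. H z' \<omega> \<partial>N) - (\<integral>\<^sup>+\<omega>. H z \<omega> \<partial>N)"
      using H_meas[OF z'] H_meas[OF z] fin H_le by (intro nn_integral_diff) auto
    also have "\<dots> = 0" unfolding eq using fin by simp
    finally have "AE \<omega> in N. H z' \<omega> - H z \<omega> = 0"
      using H_meas[OF z'] H_meas[OF z] by (subst nn_integral_0_iff_AE[symmetric]) auto
    then show ?thesis
    proof (rule eventually_mono)
      fix \<omega> assume "H z' \<omega> - H z \<omega> = 0"
      then have "H z' \<omega> \<le> H z \<omega>" by (simp add: diff_eq_0_iff_ennreal)
      with h_le show "h i \<omega> \<le> H z \<omega>" by (rule order_trans)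
    qed
  qed
  then show ?thesis using z unfolding H_def by blast
qed

lemma ereal_le_SUP_if_arctan_le:
  fixes a :: real and b :: "nat \<Rightarrow> real"
  assumes "ennreal (arctan a + pi / 2) \<le> (SUP n. ennreal (arctan (b n) + pi / 2))"
  shows "ereal a \<le> (SUP n. ereal (b n))"
proof (rule ccontr)
  assume "\<not> ?thesis"
  then obtain c where c: "(SUP n. ereal (b n)) < ereal c" "c < a"
    by (metis ereal_dense2 less_ereal.simps(1) not_le)
  have "b n \<le> c" for n using c(1) by (metis SUP_lessD UNIV_I ereal_less_eq(3) less_imp_le)
  then have "(SUP n. ennreal (arctan (b n) + pi / 2)) \<le> ennreal (arctan c + pi / 2)"
    by (intro SUP_least ennreal_leI) (simp add: arctan_monotone')
  also have "\<dots> < ennreal (arctan a + pi / 2)"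
    using c(2) arctan_lbound[of c] arctan_less_iff[of c a] by (subst ennreal_less_iff) auto
  finally show False using assms by simp
qed

text \<open>For real-valued families, apply the bounded case to the increasing bijection
  \<open>arctan + \<pi>/2\<close> onto \<open>(0, \<pi>)\<close>.\<close>

lemma countable_dominating_sequence:
  fixes f :: "'i \<Rightarrow> 'a \<Rightarrow> real"
  assumes N: "prob_space N" and I: "I \<noteq> {}" and f: "\<And>i. i \<in> I \<Longrightarrow> f i \<in> borel_measurable N"
  shows "\<exists>z :: nat \<Rightarrow> 'i. range z \<subseteq> I \<and> (\<forall>i\<in>I. AE \<omega> in N. ereal (f i \<omega>) \<le> (SUP n. ereal (f (z n) \<omega>)))"
proof -
  obtain z :: "nat \<Rightarrow> 'i" where z: "range z \<subseteq> I" and dom: "\<forall>i\<in>I. AE \<omega> in N.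
      ennreal (arctan (f i \<omega>) + pi / 2) \<le> (SUP n. ennreal (arctan (f (z n) \<omega>) + pi / 2))"
  proof (atomize_elim, rule bounded_family_dominating_sequence[OF N I])
    show "(\<lambda>\<omega>. ennreal (arctan (f i \<omega>) + pi / 2)) \<in> borel_measurable N" if "i \<in> I" for i
      using f[OF that] by measurable
    show "ennreal (arctan (f i \<omega>) + pi / 2) \<le> ennreal pi" for i \<omega>
      using arctan_ubound[of "f i \<omega>"] by (intro ennreal_leI) linarith
  qed
  show ?thesis
  proof (intro exI[of _ z] conjI ballI)
    fix i assume "i \<in> I"
    with dom have "AE \<omega> in N. ennreal (arctan (f i \<omega>) + pi / 2)
        \<le> (SUP n. ennreal (arctan (f (z n) \<omega>) + pi / 2))" by blast
    then show "AE \<omega> in N. ereal (f i \<omega>) \<le> (SUP n. ereal (f (z n) \<omega>))"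
      by (rule eventually_mono) (rule ereal_le_SUP_if_arctan_le)
  qed (rule z)
qed

section \<open>The conditional penalty\<close>

definition cond_gap :: "(real \<Rightarrow> 'd::euclidean_space) measure \<Rightarrow> real \<Rightarrow> real
    \<Rightarrow> (real \<Rightarrow> ((real \<Rightarrow> 'd) \<Rightarrow> real) \<Rightarrow> (real \<Rightarrow> 'd) \<Rightarrow> real) \<Rightarrow> ((real \<Rightarrow> 'd) \<Rightarrow> real)
    \<Rightarrow> (real \<Rightarrow> 'd) \<Rightarrow> real" where
  "cond_gap P T t Et X \<omega> = real_cond_exp P (filt T t) X \<omega> - Et t X \<omega>"

lemma max_minus_le_abs_indicator_diff:
  fixes a b c w :: real
  assumes "w * a + (1 - w) * b \<le> c" "0 \<le> w" "w \<le> 1"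
  shows "max (max a b - c) 0 \<le> \<bar>(if b \<le> a then 1 else 0) - w\<bar> * \<bar>a - b\<bar>"
proof (cases "b \<le> a")
  case True
  have "a - c \<le> (1 - w) * (a - b)" using assms(1) by (simp add: algebra_simps)
  then show ?thesis using True assms(2,3) by (simp add: abs_mult)
next
  case False
  have "b - c \<le> w * (b - a)" using assms(1) by (simp add: algebra_simps)
  then show ?thesis using False assms(2,3) by (simp add: abs_mult)
qed

context
  fixes T :: real
    and Pset :: "(real \<Rightarrow> 'd::euclidean_space) measure set"
    and Et :: "real \<Rightarrow> ((real \<Rightarrow> 'd) \<Rightarrow> real) \<Rightarrow> (real \<Rightarrow> 'd) \<Rightarrow> real"
    and Etil :: "((real \<Rightarrow> 'd) \<Rightarrow> real) \<Rightarrow> real"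
    and P :: "(real \<Rightarrow> 'd) measure" and t :: real
  assumes Pset_ne: "Pset \<noteq> {}"
    and Pset_prob: "\<And>Q. Q \<in> Pset \<Longrightarrow> prob_space Q \<and> space Q = paths T \<and> sets Q = sets (filt T T)"
    and Et_range: "\<And>s X. s \<in> {0..T} \<Longrightarrow> X \<in> L1G Pset T T \<Longrightarrow> Et s X \<in> L1G Pset T s"
    and Et_const: "\<And>s c. s \<in> {0..T} \<Longrightarrow> qs Pset (\<lambda>\<omega>. Et s (\<lambda>_. c) \<omega> = c)"
    and Et_transl: "\<And>s X Y. s \<in> {0..T} \<Longrightarrow> X \<in> L1G Pset T T \<Longrightarrow> Y \<in> L1G Pset T s \<Longrightarrow>
        qs Pset (\<lambda>\<omega>. Et s (\<lambda>\<omega>'. X \<omega>' + Y \<omega>') \<omega> = Et s X \<omega> + Y \<omega>)"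
    and Et_convex: "\<And>s X Y w. s \<in> {0..T} \<Longrightarrow> X \<in> L1G Pset T T \<Longrightarrow> Y \<in> L1G Pset T T \<Longrightarrow>
        w \<in> L1G Pset T s \<Longrightarrow> (\<forall>\<omega>. 0 \<le> w \<omega> \<and> w \<omega> \<le> 1) \<Longrightarrow>
        (\<lambda>\<omega>. w \<omega> * X \<omega> + (1 - w \<omega>) * Y \<omega>) \<in> L1G Pset T T \<Longrightarrow>
        qs Pset (\<lambda>\<omega>. Et s (\<lambda>\<omega>'. w \<omega>' * X \<omega>' + (1 - w \<omega>') * Y \<omega>') \<omega>
                     \<le> w \<omega> * Et s X \<omega> + (1 - w \<omega>) * Et s Y \<omega>)"
    and Etil_cons: "\<And>s X. s \<in> {0..T} \<Longrightarrow> X \<in> L1G Pset T T \<Longrightarrow> Etil (Et s X) = Etil X"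
    and Etil_dom: "\<And>X Y. X \<in> L1G Pset T T \<Longrightarrow> Y \<in> L1G Pset T T \<Longrightarrow>
        ereal (Etil X - Etil Y) \<le> Ehat Pset (\<lambda>\<omega>. X \<omega> - Y \<omega>)"
    and P_in: "P \<in> Pset"
    and t_in: "t \<in> {0..T}"
begin

lemma prob_space_P: "prob_space P" and space_P: "space P = paths T"
  and sets_P: "sets P = sets (filt T T)"
  using Pset_prob[OF P_in] by auto

lemma t_nonneg: "0 \<le> t" and t_le_T: "t \<le> T" using t_in by auto

lemma subalgebra_P: "subalgebra P (filt T t)"
  by (rule subalgebra_filt[OF sets_P space_P t_le_T])

lemma sigma_finite_subalgebra_P: "sigma_finite_subalgebra P (filt T t)"
proof -
  interpret finite_measure "restr_to_subalg P (filt T t)"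
    by (rule finite_measure_restr_to_subalg[OF subalgebra_P])
      (use prob_space_P in \<open>simp add: prob_space_def\<close>)
  show ?thesis unfolding sigma_finite_subalgebra_def
    using subalgebra_P sigma_finite_measure_axioms by simp
qed

lemma qs_AE_P: "qs Pset \<Phi> \<Longrightarrow> AE \<omega> in P. \<Phi> \<omega>"
  unfolding qs_def using P_in by blast

lemma L1G_integrable_P: "X \<in> L1G Pset T s \<Longrightarrow> s \<le> T \<Longrightarrow> integrable P X"
  using L1G_integrable[OF Pset_prob P_in] by blast

lemma L1G_measurable_P: "X \<in> L1G Pset T s \<Longrightarrow> s \<le> T \<Longrightarrow> X \<in> borel_measurable P"
  using L1G_measurable_Pset[OF Pset_prob P_in] by blast

lemma zero_in_L1G: "(\<lambda>_. 0) \<in> L1G Pset T T"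
  using L1G_const[OF Pset_prob, where s = T] t_in by simp

lemma Et_integrable: "X \<in> L1G Pset T T \<Longrightarrow> integrable P (Et t X)"
  using L1G_integrable_P[OF Et_range[OF t_in] t_le_T] .

lemma cond_gap_measurable: "X \<in> L1G Pset T T \<Longrightarrow> cond_gap P T t Et X \<in> borel_measurable (filt T t)"
  unfolding cond_gap_def[abs_def]
  using L1G_measurable[OF Pset_prob Et_range[OF t_in]] by measurable

lemma cond_gap_integrable: "X \<in> L1G Pset T T \<Longrightarrow> integrable P (cond_gap P T t Et X)"
  unfolding cond_gap_def[abs_def]
  by (intro Bochner_Integration.integrable_diff Et_integrable
      sigma_finite_subalgebra.real_cond_exp_int(1)[OF sigma_finite_subalgebra_P]
      L1G_integrable_P[OF _ order_refl])

lemma integral_cond_gap: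
  "X \<in> L1G Pset T T \<Longrightarrow> (\<integral>\<omega>. cond_gap P T t Et X \<omega> \<partial>P) = (\<integral>\<omega>. X \<omega> \<partial>P) - (\<integral>\<omega>. Et t X \<omega> \<partial>P)"
  unfolding cond_gap_def using L1G_integrable_P[of X T] Et_integrable[of X]
  by (simp add: sigma_finite_subalgebra.real_cond_exp_int[OF sigma_finite_subalgebra_P])

lemma cond_gap_zero: "AE \<omega> in P. cond_gap P T t Et (\<lambda>_. 0) \<omega> = 0"
proof -
  have "AE \<omega> in P. real_cond_exp P (filt T t) (\<lambda>_. 0) \<omega> = 0"
    using sigma_finite_subalgebra.real_cond_exp_F_meas[OF sigma_finite_subalgebra_P, of "\<lambda>_. 0"] by simp
  with qs_AE_P[OF Et_const[OF t_in, of 0]] show ?thesis unfolding cond_gap_def by eventually_elim simp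
qed

lemma cond_gap_convex_comb:
  assumes X1: "X1 \<in> L1G Pset T T" and X2: "X2 \<in> L1G Pset T T"
    and w: "lip_cyl T t w" "\<And>\<omega>. 0 \<le> w \<omega> \<and> w \<omega> \<le> 1"
  shows "AE \<omega> in P. w \<omega> * cond_gap P T t Et X1 \<omega> + (1 - w \<omega>) * cond_gap P T t Et X2 \<omega>
      \<le> cond_gap P T t Et (\<lambda>\<omega>. w \<omega> * X1 \<omega> + (1 - w \<omega>) * X2 \<omega>) \<omega>"
proof -
  have wF [measurable]: "w \<in> borel_measurable (filt T t)" by (rule lip_cyl_measurable[OF w(1)])
  have X3: "(\<lambda>\<omega>. w \<omega> * X1 \<omega> + (1 - w \<omega>) * X2 \<omega>) \<in> L1G Pset T T"
    by (rule L1G_convex_comb[OF Pset_prob t_nonneg t_le_T w X1 X2])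
  have w1F [measurable]: "(\<lambda>\<omega>. 1 - w \<omega>) \<in> borel_measurable (filt T t)" by measurable
  have wP: "w \<in> borel_measurable P" and w1P: "(\<lambda>\<omega>. 1 - w \<omega>) \<in> borel_measurable P"
    by (rule measurable_from_subalg[OF subalgebra_P], measurable)+
  have i1: "integrable P (\<lambda>\<omega>. w \<omega> * X1 \<omega>)" and i2: "integrable P (\<lambda>\<omega>. (1 - w \<omega>) * X2 \<omega>)"
    using w(2) L1G_integrable_P[OF X1 order_refl] L1G_integrable_P[OF X2 order_refl] wP w1P
    by (auto intro!: integrable_bounded_mult simp: abs_le_iff)
  note ce = sigma_finite_subalgebra.real_cond_exp_add[OF sigma_finite_subalgebra_P i1 i2]
    sigma_finite_subalgebra.real_cond_exp_mult[OF sigma_finite_subalgebra_P wF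
      L1G_measurable_P[OF X1 order_refl] i1]
    sigma_finite_subalgebra.real_cond_exp_mult[OF sigma_finite_subalgebra_P w1F
      L1G_measurable_P[OF X2 order_refl] i2]
  have "AE \<omega> in P. Et t (\<lambda>\<omega>. w \<omega> * X1 \<omega> + (1 - w \<omega>) * X2 \<omega>) \<omega> \<le> w \<omega> * Et t X1 \<omega> + (1 - w \<omega>) * Et t X2 \<omega>"
    by (intro qs_AE_P Et_convex[OF t_in X1 X2 lip_cyl_in_L1G[OF Pset_prob w(1)] _ X3]) (use w(2) in auto)
  with ce show ?thesis unfolding cond_gap_def by eventually_elim (simp add: algebra_simps)
qed

text \<open>Directedness: a cylinder weight approximating the indicator of
  \<open>{cond_gap X2 \<le> cond_gap X1}\<close> in the \<open>|cond_gap X1 - cond_gap X2|\<close>-weighted \<open>L\<^sup>1\<close> distance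
  pastes \<open>X1\<close> and \<open>X2\<close> into an \<open>X3\<close> whose gap nearly dominates both.\<close>

lemma cond_gap_directed:
  assumes X1: "X1 \<in> L1G Pset T T" and X2: "X2 \<in> L1G Pset T T" and e: "0 < e"
  shows "\<exists>X3\<in>L1G Pset T T. (\<integral>\<omega>. max (max (cond_gap P T t Et X1 \<omega>) (cond_gap P T t Et X2 \<omega>)
            - cond_gap P T t Et X3 \<omega>) 0 \<partial>P) < e"
proof -
  define f1 where "f1 = cond_gap P T t Et X1"
  define f2 where "f2 = cond_gap P T t Et X2"
  have [measurable]: "f1 \<in> borel_measurable (filt T t)" "f2 \<in> borel_measurable (filt T t)"
    unfolding f1_def f2_def using X1 X2 by (auto intro: cond_gap_measurable)
  have f1i: "integrable P f1" and f2i: "integrable P f2"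
    unfolding f1_def f2_def using X1 X2 by (auto intro: cond_gap_integrable)
  define d where "d \<omega> = \<bar>f1 \<omega> - f2 \<omega>\<bar>" for \<omega>
  have di: "integrable P d" unfolding d_def using f1i f2i by auto
  define A where "A = {\<omega> \<in> paths T. f2 \<omega> \<le> f1 \<omega>}"
  have "{\<omega> \<in> space (filt T t). f2 \<omega> \<le> f1 \<omega>} \<in> sets (filt T t)" by measurable
  then have AF: "A \<in> sets (filt T t)" unfolding A_def by simp
  then have AP: "A \<in> sets P" using subalgebra_P unfolding subalgebra_def by blast
  obtain w where w: "w \<in> weights T t" "weighted_L1_dist P d (indicator A) w < e"
    using weight_approximable_filt[OF space_P sets_P t_nonneg t_le_T di _ AF] e
    unfolding weight_approximable_def d_def by fastforce
  have wl: "lip_cyl T t w" and w01: "\<And>\<omega>. 0 \<le> w \<omega> \<and> w \<omega> \<le> 1" using w(1) unfolding weights_def by auto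
  define X3 where "X3 = (\<lambda>\<omega>. w \<omega> * X1 \<omega> + (1 - w \<omega>) * X2 \<omega>)"
  have X3: "X3 \<in> L1G Pset T T"
    unfolding X3_def by (rule L1G_convex_comb[OF Pset_prob t_nonneg t_le_T wl w01 X1 X2])
  have lhs: "integrable P (\<lambda>\<omega>. max (max (f1 \<omega>) (f2 \<omega>) - cond_gap P T t Et X3 \<omega>) 0)"
    using f1i f2i cond_gap_integrable[OF X3] by auto
  have rhs: "integrable P (\<lambda>\<omega>. \<bar>indicator A \<omega> - w \<omega>\<bar> * d \<omega>)"
    using AP weights_measurable[OF space_P sets_P t_nonneg t_le_T di _ w(1)] w01
    by (intro integrable_bounded_mult[OF di])
      (auto simp: d_def intro!: abs_diff_unit_interval_le_1 indicator_unit_interval)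
  have "(\<integral>\<omega>. max (max (f1 \<omega>) (f2 \<omega>) - cond_gap P T t Et X3 \<omega>) 0 \<partial>P)
      \<le> (\<integral>\<omega>. \<bar>indicator A \<omega> - w \<omega>\<bar> * d \<omega> \<partial>P)"
  proof (rule integral_mono_AE[OF lhs rhs])
    show "AE \<omega> in P. max (max (f1 \<omega>) (f2 \<omega>) - cond_gap P T t Et X3 \<omega>) 0 \<le> \<bar>indicator A \<omega> - w \<omega>\<bar> * d \<omega>"
      using cond_gap_convex_comb[OF X1 X2 wl w01] AE_space
    proof eventually_elim
      case (elim \<omega>)
      then have "indicator A \<omega> = (if f2 \<omega> \<le> f1 \<omega> then 1 else 0 :: real)"
        using space_P unfolding A_def by auto
      then show ?case unfolding d_def using elim w01[of \<omega>]
        by (simp only: X3_def f1_def f2_def max_minus_le_abs_indicator_diff)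
    qed
  qed
  then show ?thesis using w(2) X3 unfolding weighted_L1_dist_def f1_def f2_def by (intro bexI[of _ X3]) auto
qed

lemma cond_gap_Max_directed:
  fixes z :: "nat \<Rightarrow> (real \<Rightarrow> 'd) \<Rightarrow> real"
  assumes z: "\<And>n. z n \<in> L1G Pset T T"
  shows "0 < e \<Longrightarrow> \<exists>X\<in>L1G Pset T T. (\<integral>\<omega>. max (Max ((\<lambda>i. cond_gap P T t Et (z i) \<omega>) ` {..n})
            - cond_gap P T t Et X \<omega>) 0 \<partial>P) < e"
proof (induction n arbitrary: e)
  case 0
  show ?case using 0 z[of 0] by (intro bexI[of _ "z 0"]) auto
next
  case (Suc n)
  define g where "g n \<omega> = Max ((\<lambda>i. cond_gap P T t Et (z i) \<omega>) ` {..n})" for n \<omega>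
  have g_Suc: "g (Suc n) \<omega> = max (cond_gap P T t Et (z (Suc n)) \<omega>) (g n \<omega>)" for \<omega>
    unfolding g_def by (simp add: atMost_Suc)
  have g_int: "integrable P (g n)"
    unfolding g_def using z by (intro integrable_MAX cond_gap_integrable) auto
  obtain Y where Y: "Y \<in> L1G Pset T T" "(\<integral>\<omega>. max (g n \<omega> - cond_gap P T t Et Y \<omega>) 0 \<partial>P) < e / 2"
    using Suc.IH[of "e / 2"] Suc.prems unfolding g_def by auto
  obtain X where X: "X \<in> L1G Pset T T"
    "(\<integral>\<omega>. max (max (cond_gap P T t Et Y \<omega>) (cond_gap P T t Et (z (Suc n)) \<omega>)
        - cond_gap P T t Et X \<omega>) 0 \<partial>P) < e / 2"
    using cond_gap_directed[OF Y(1) z[of "Suc n"]] Suc.prems by (meson half_gt_zero)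
  define gap_X where "gap_X \<omega> = max (max (cond_gap P T t Et Y \<omega>) (cond_gap P T t Et (z (Suc n)) \<omega>)
      - cond_gap P T t Et X \<omega>) 0" for \<omega>
  define gap_Y where "gap_Y \<omega> = max (g n \<omega> - cond_gap P T t Et Y \<omega>) 0" for \<omega>
  have i: "integrable P gap_X" "integrable P gap_Y"
      "integrable P (\<lambda>\<omega>. max (g (Suc n) \<omega> - cond_gap P T t Et X \<omega>) 0)"
    unfolding gap_X_def gap_Y_def g_Suc
    using g_int cond_gap_integrable[OF X(1)] cond_gap_integrable[OF Y(1)] cond_gap_integrable[OF z] by auto
  have "(\<integral>\<omega>. max (g (Suc n) \<omega> - cond_gap P T t Et X \<omega>) 0 \<partial>P) \<le> (\<integral>\<omega>. gap_X \<omega> + gap_Y \<omega> \<partial>P)"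
    by (rule integral_mono[OF i(3) Bochner_Integration.integrable_add[OF i(1,2)]])
      (simp add: gap_X_def gap_Y_def g_Suc max_def)
  also have "\<dots> < e"
    unfolding Bochner_Integration.integral_add[OF i(1,2)] using X(2) Y(2)
    unfolding gap_X_def gap_Y_def by linarith
  finally show ?case using X(1) unfolding g_def by blast
qed

lemma SUP_integral_cond_gap_nonneg: "0 \<le> (SUP X\<in>L1G Pset T T. ereal (\<integral>\<omega>. cond_gap P T t Et X \<omega> \<partial>P))"
proof -
  have "ereal 0 = ereal (\<integral>\<omega>. cond_gap P T t Et (\<lambda>_. 0) \<omega> \<partial>P)"
    using integral_eq_zero_AE[OF cond_gap_zero] by simp
  also have "\<dots> \<le> (SUP X\<in>L1G Pset T T. ereal (\<integral>\<omega>. cond_gap P T t Et X \<omega> \<partial>P))"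
    using zero_in_L1G by (rule SUP_upper)
  finally show ?thesis by (simp add: zero_ereal_def)
qed

text \<open>Starting the sequence with \<open>0\<close> makes its supremum a.e. nonnegative, as \<open>exp_ereal\<close>
  integrates only the positive part.\<close>

lemma cond_gap_dominating_sequence:
  obtains z :: "nat \<Rightarrow> (real \<Rightarrow> 'd) \<Rightarrow> real"
  where "\<And>n. z n \<in> L1G Pset T T" "z 0 = (\<lambda>_. 0)"
    "\<And>X. X \<in> L1G Pset T T \<Longrightarrow> AE \<omega> in restr_to_subalg P (filt T t).
        ereal (cond_gap P T t Et X \<omega>) \<le> (SUP n. ereal (cond_gap P T t Et (z n) \<omega>))"
proof -
  have "\<exists>z :: nat \<Rightarrow> _. range z \<subseteq> L1G Pset T T \<and> (\<forall>X\<in>L1G Pset T T. AE \<omega> in restr_to_subalg P (filt T t).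
      ereal (cond_gap P T t Et X \<omega>) \<le> (SUP n. ereal (cond_gap P T t Et (z n) \<omega>)))"
    using zero_in_L1G cond_gap_measurable measurable_cong_sets[OF sets_restr_to_subalg[OF subalgebra_P] refl]
    by (intro countable_dominating_sequence prob_space_restr_to_subalg[OF subalgebra_P prob_space_P]) auto
  then obtain z :: "nat \<Rightarrow> _" where z: "range z \<subseteq> L1G Pset T T"
    and dom: "\<And>X. X \<in> L1G Pset T T \<Longrightarrow> AE \<omega> in restr_to_subalg P (filt T t).
        ereal (cond_gap P T t Et X \<omega>) \<le> (SUP n. ereal (cond_gap P T t Et (z n) \<omega>))"
    by blast
  define z' where "z' = case_nat (\<lambda>_. 0) z"
  have le: "(SUP n. ereal (cond_gap P T t Et (z n) \<omega>)) \<le> (SUP n. ereal (cond_gap P T t Et (z' n) \<omega>))" for \<omega>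
    unfolding z'_def by (intro SUP_least) (metis SUP_upper UNIV_I old.nat.simps(5))
  have dom': "AE \<omega> in restr_to_subalg P (filt T t).
      ereal (cond_gap P T t Et X \<omega>) \<le> (SUP n. ereal (cond_gap P T t Et (z' n) \<omega>))"
    if "X \<in> L1G Pset T T" for X
    using dom[OF that] by (rule eventually_mono) (rule order_trans[OF _ le])
  have "z' n \<in> L1G Pset T T" for n
    using z zero_in_L1G unfolding z'_def by (cases n) auto
  moreover have "z' 0 = (\<lambda>_. 0)" unfolding z'_def by simp
  ultimately show thesis using dom' by (rule that)
qed

lemma alphaT_AE_eq_SUP:
  fixes z :: "nat \<Rightarrow> (real \<Rightarrow> 'd) \<Rightarrow> real"
  assumes z: "\<And>n. z n \<in> L1G Pset T T"
    and dom: "\<And>X. X \<in> L1G Pset T T \<Longrightarrow> AE \<omega> in restr_to_subalg P (filt T t).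
        ereal (cond_gap P T t Et X \<omega>) \<le> (SUP n. ereal (cond_gap P T t Et (z n) \<omega>))"
  shows "AE \<omega> in P. alphaT Pset T Et t P \<omega> = (SUP n. ereal (cond_gap P T t Et (z n) \<omega>))"
proof -
  define N where "N = restr_to_subalg P (filt T t)"
  define F where "F = {(\<lambda>\<omega>. ereal (real_cond_exp P (filt T t) Y \<omega> - Et t Y \<omega>)) | Y. Y \<in> L1G Pset T T}"
  define Z where "Z \<omega> = (SUP n. ereal (cond_gap P T t Et (z n) \<omega>))" for \<omega>
  have F_eq: "F = (\<lambda>X \<omega>. ereal (cond_gap P T t Et X \<omega>)) ` L1G Pset T T"
    unfolding F_def cond_gap_def by auto
  have "is_ess_sup N F Z"
    unfolding is_ess_sup_def
  proof (intro conjI ballI impI)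
    show "Z \<in> borel_measurable N" unfolding Z_def N_def
      using z cond_gap_measurable measurable_cong_sets[OF sets_restr_to_subalg[OF subalgebra_P] refl]
      by (intro borel_measurable_SUP borel_measurable_ereal) auto
    show "AE \<omega> in N. f \<omega> \<le> Z \<omega>" if "f \<in> F" for f
      using that dom unfolding F_eq N_def Z_def by auto
    show "AE \<omega> in N. Z \<omega> \<le> Z' \<omega>" if "\<forall>f\<in>F. AE \<omega> in N. f \<omega> \<le> Z' \<omega>" for Z'
    proof -
      have "AE \<omega> in N. ereal (cond_gap P T t Et (z n) \<omega>) \<le> Z' \<omega>" for n
        using that z unfolding F_eq by auto
      then have "AE \<omega> in N. \<forall>n. ereal (cond_gap P T t Et (z n) \<omega>) \<le> Z' \<omega>"
        by (simp add: AE_all_countable)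
      then show ?thesis unfolding Z_def by (rule eventually_mono) (rule SUP_least, blast)
    qed
  qed
  then have "is_ess_sup N F (ess_sup_fam N F)" unfolding ess_sup_fam_def by (rule someI[of _ Z])
  with \<open>is_ess_sup N F Z\<close> have "AE \<omega> in N. ess_sup_fam N F \<omega> \<le> Z \<omega>" "AE \<omega> in N. Z \<omega> \<le> ess_sup_fam N F \<omega>"
    unfolding is_ess_sup_def by blast+
  then have "AE \<omega> in N. ess_sup_fam N F \<omega> = Z \<omega>" by eventually_elim (rule antisym)
  then show ?thesis unfolding alphaT_def N_def F_def Z_def
    by (rule AE_restr_to_subalg[OF subalgebra_P])
qed

lemma integral_cond_gap_le_exp_SUP:
  fixes z :: "nat \<Rightarrow> (real \<Rightarrow> 'd) \<Rightarrow> real"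
  assumes z: "\<And>n. z n \<in> L1G Pset T T" and z0: "z 0 = (\<lambda>_. 0)"
    and dom: "AE \<omega> in P. ereal (cond_gap P T t Et X \<omega>) \<le> (SUP n. ereal (cond_gap P T t Et (z n) \<omega>))"
    and X: "X \<in> L1G Pset T T"
  shows "ereal (\<integral>\<omega>. cond_gap P T t Et X \<omega> \<partial>P)
      \<le> enn2ereal (\<integral>\<^sup>+\<omega>. e2ennreal (SUP n. ereal (cond_gap P T t Et (z n) \<omega>)) \<partial>P)"
proof -
  define f where "f = cond_gap P T t Et X"
  have f: "integrable P f" unfolding f_def by (rule cond_gap_integrable[OF X])
  have "AE \<omega> in P. 0 \<le> (SUP n. ereal (cond_gap P T t Et (z n) \<omega>))"
    using cond_gap_zero
  proof eventually_elim
    case (elim \<omega>)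
    then have "ereal 0 \<le> ereal (cond_gap P T t Et (z 0) \<omega>)" using z0 by simp
    also have "\<dots> \<le> (SUP n. ereal (cond_gap P T t Et (z n) \<omega>))" by (rule SUP_upper) simp
    finally show ?case by (simp add: zero_ereal_def)
  qed
  with dom have "AE \<omega> in P. ennreal (max (f \<omega>) 0) \<le> e2ennreal (SUP n. ereal (cond_gap P T t Et (z n) \<omega>))"
  proof eventually_elim
    case (elim \<omega>)
    then have "ereal (max (f \<omega>) 0) \<le> (SUP n. ereal (cond_gap P T t Et (z n) \<omega>))"
      unfolding f_def by (auto simp: max_def zero_ereal_def)
    then show ?case using e2ennreal_mono by (fastforce simp: e2ennreal_ereal)
  qed
  then have "(\<integral>\<^sup>+\<omega>. ennreal (max (f \<omega>) 0) \<partial>P)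
      \<le> (\<integral>\<^sup>+\<omega>. e2ennreal (SUP n. ereal (cond_gap P T t Et (z n) \<omega>)) \<partial>P)"
    by (rule nn_integral_mono_AE)
  moreover have "(\<integral>\<^sup>+\<omega>. ennreal (max (f \<omega>) 0) \<partial>P) = ennreal (\<integral>\<omega>. max (f \<omega>) 0 \<partial>P)"
    using f by (intro nn_integral_eq_integral) auto
  moreover have "0 \<le> (\<integral>\<omega>. max (f \<omega>) 0 \<partial>P)" by (intro integral_nonneg_AE) auto
  ultimately have "ereal (\<integral>\<omega>. max (f \<omega>) 0 \<partial>P)
      \<le> enn2ereal (\<integral>\<^sup>+\<omega>. e2ennreal (SUP n. ereal (cond_gap P T t Et (z n) \<omega>)) \<partial>P)"
    by (simp add: less_eq_ennreal.rep_eq)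
  moreover have "(\<integral>\<omega>. f \<omega> \<partial>P) \<le> (\<integral>\<omega>. max (f \<omega>) 0 \<partial>P)" using f by (intro integral_mono) auto
  ultimately show ?thesis unfolding f_def by (meson ereal_less_eq(3) order_trans)
qed

lemma integral_Max_cond_gap_le_SUP:
  fixes z :: "nat \<Rightarrow> (real \<Rightarrow> 'd) \<Rightarrow> real"
  assumes z: "\<And>n. z n \<in> L1G Pset T T"
  shows "ereal (\<integral>\<omega>. Max ((\<lambda>i. cond_gap P T t Et (z i) \<omega>) ` {..n}) \<partial>P)
      \<le> (SUP X\<in>L1G Pset T T. ereal (\<integral>\<omega>. cond_gap P T t Et X \<omega> \<partial>P))" (is "_ \<le> ?S")
proof -
  define g where "g \<omega> = Max ((\<lambda>i. cond_gap P T t Et (z i) \<omega>) ` {..n})" for \<omega>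
  have g: "integrable P g" unfolding g_def using z by (intro integrable_MAX cond_gap_integrable) auto
  have "ereal (\<integral>\<omega>. g \<omega> \<partial>P) \<le> ?S"
  proof (rule ereal_le_epsilon2)
    fix e :: real assume "0 < e"
    with cond_gap_Max_directed[of z, OF z] obtain X where X: "X \<in> L1G Pset T T"
      "(\<integral>\<omega>. max (g \<omega> - cond_gap P T t Et X \<omega>) 0 \<partial>P) < e"
      unfolding g_def by blast
    have "(\<integral>\<omega>. g \<omega> \<partial>P) \<le> (\<integral>\<omega>. cond_gap P T t Et X \<omega> + max (g \<omega> - cond_gap P T t Et X \<omega>) 0 \<partial>P)"
      using g cond_gap_integrable[OF X(1)] by (intro integral_mono) auto
    also have "\<dots> < (\<integral>\<omega>. cond_gap P T t Et X \<omega> \<partial>P) + e"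
      using g cond_gap_integrable[OF X(1)] X(2) by (subst Bochner_Integration.integral_add) auto
    finally have "ereal (\<integral>\<omega>. g \<omega> \<partial>P) \<le> ereal (\<integral>\<omega>. cond_gap P T t Et X \<omega> \<partial>P) + ereal e" by simp
    also have "\<dots> \<le> ?S + ereal e" using X(1) by (intro add_right_mono SUP_upper)
    finally show "ereal (\<integral>\<omega>. g \<omega> \<partial>P) \<le> ?S + ereal e" .
  qed
  then show ?thesis unfolding g_def .
qed

text \<open>Monotone convergence along the running maxima of the sequence.\<close>

lemma exp_SUP_le_SUP_integral_cond_gap:
  fixes z :: "nat \<Rightarrow> (real \<Rightarrow> 'd) \<Rightarrow> real"
  assumes z: "\<And>n. z n \<in> L1G Pset T T" and z0: "z 0 = (\<lambda>_. 0)"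
  shows "enn2ereal (\<integral>\<^sup>+\<omega>. e2ennreal (SUP n. ereal (cond_gap P T t Et (z n) \<omega>)) \<partial>P)
      \<le> (SUP X\<in>L1G Pset T T. ereal (\<integral>\<omega>. cond_gap P T t Et X \<omega> \<partial>P))" (is "_ \<le> ?S")
proof -
  define g where "g n \<omega> = Max ((\<lambda>i. cond_gap P T t Et (z i) \<omega>) ` {..n})" for n \<omega>
  have g_int: "integrable P (g n)" for n
    unfolding g_def using z by (intro integrable_MAX cond_gap_integrable) auto
  have g_mono: "incseq (\<lambda>n. g n \<omega>)" for \<omega>
    unfolding g_def by (intro incseq_SucI Max_mono) auto
  have g_nonneg: "AE \<omega> in P. 0 \<le> g n \<omega>" for n
  proof (rule eventually_mono[OF cond_gap_zero])
    fix \<omega> assume "cond_gap P T t Et (\<lambda>_. 0) \<omega> = 0"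
    moreover have "cond_gap P T t Et (z 0) \<omega> \<le> g n \<omega>" unfolding g_def by (intro Max_ge) auto
    ultimately show "0 \<le> g n \<omega>" using z0 by simp
  qed
  have SUP_g: "(SUP n. ereal (cond_gap P T t Et (z n) \<omega>)) = (SUP n. ereal (g n \<omega>))" for \<omega>
  proof (rule antisym)
    show "(SUP n. ereal (cond_gap P T t Et (z n) \<omega>)) \<le> (SUP n. ereal (g n \<omega>))"
      by (intro SUP_mono) (auto simp: g_def intro!: Max_ge)
    show "(SUP n. ereal (g n \<omega>)) \<le> (SUP n. ereal (cond_gap P T t Et (z n) \<omega>))"
    proof (rule SUP_least)
      fix n
      have "g n \<omega> \<in> (\<lambda>i. cond_gap P T t Et (z i) \<omega>) ` {..n}" unfolding g_def by (intro Max_in) auto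
      then obtain i where "g n \<omega> = cond_gap P T t Et (z i) \<omega>" by auto
      then show "ereal (g n \<omega>) \<le> (SUP n. ereal (cond_gap P T t Et (z n) \<omega>))" by (metis SUP_upper UNIV_I)
    qed
  qed
  have e2_eq: "e2ennreal (SUP n. ereal (cond_gap P T t Et (z n) \<omega>)) = (SUP n. ennreal (g n \<omega>))" for \<omega>
  proof -
    have "mono (\<lambda>n. ereal (g n \<omega>))" using g_mono[of \<omega>] unfolding incseq_def mono_def by simp
    then show ?thesis unfolding SUP_g
      by (subst sup_continuousD[OF sup_continuous_e2ennreal[OF sup_continuous_id]]) simp_all
  qed
  have "(\<integral>\<^sup>+\<omega>. e2ennreal (SUP n. ereal (cond_gap P T t Et (z n) \<omega>)) \<partial>P)
      = (SUP n. \<integral>\<^sup>+\<omega>. ennreal (g n \<omega>) \<partial>P)"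
    unfolding e2_eq
  proof (rule nn_integral_monotone_convergence_SUP)
    show "incseq (\<lambda>n \<omega>. ennreal (g n \<omega>))"
      using g_mono by (auto simp: incseq_def le_fun_def intro: ennreal_leI)
    show "(\<lambda>\<omega>. ennreal (g n \<omega>)) \<in> borel_measurable P" for n
      using borel_measurable_integrable[OF g_int[of n]] by measurable
  qed
  also have "\<dots> \<le> e2ennreal ?S"
  proof (rule SUP_least)
    fix n
    have "ereal (\<integral>\<omega>. g n \<omega> \<partial>P) \<le> ?S"
      unfolding g_def by (rule integral_Max_cond_gap_le_SUP[of z, OF z])
    then have "e2ennreal (ereal (\<integral>\<omega>. g n \<omega> \<partial>P)) \<le> e2ennreal ?S" by (rule e2ennreal_mono)
    then show "(\<integral>\<^sup>+\<omega>. ennreal (g n \<omega>) \<partial>P) \<le> e2ennreal ?S"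
      using nn_integral_eq_integral[OF g_int g_nonneg] by simp
  qed
  finally show ?thesis
    using SUP_integral_cond_gap_nonneg by (simp add: less_eq_ennreal.rep_eq enn2ereal_e2ennreal)
qed

theorem exp_alphaT_eq_SUP_integral_cond_gap:
  "exp_ereal P (alphaT Pset T Et t P) = (SUP X\<in>L1G Pset T T. ereal (\<integral>\<omega>. cond_gap P T t Et X \<omega> \<partial>P))"
proof -
  obtain z :: "nat \<Rightarrow> (real \<Rightarrow> 'd) \<Rightarrow> real" where z: "\<And>n. z n \<in> L1G Pset T T" "z 0 = (\<lambda>_. 0)"
    and dom: "\<And>X. X \<in> L1G Pset T T \<Longrightarrow> AE \<omega> in restr_to_subalg P (filt T t).
        ereal (cond_gap P T t Et X \<omega>) \<le> (SUP n. ereal (cond_gap P T t Et (z n) \<omega>))"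
    by (rule cond_gap_dominating_sequence) (rule that)
  have "exp_ereal P (alphaT Pset T Et t P)
      = enn2ereal (\<integral>\<^sup>+\<omega>. e2ennreal (SUP n. ereal (cond_gap P T t Et (z n) \<omega>)) \<partial>P)"
    unfolding exp_ereal_def using alphaT_AE_eq_SUP[OF z(1) dom]
    by (intro arg_cong[where f = enn2ereal] nn_integral_cong_AE) auto
  also have "\<dots> = (SUP X\<in>L1G Pset T T. ereal (\<integral>\<omega>. cond_gap P T t Et X \<omega> \<partial>P))"
  proof (rule antisym)
    show "(SUP X\<in>L1G Pset T T. ereal (\<integral>\<omega>. cond_gap P T t Et X \<omega> \<partial>P))
        \<le> enn2ereal (\<integral>\<^sup>+\<omega>. e2ennreal (SUP n. ereal (cond_gap P T t Et (z n) \<omega>)) \<partial>P)"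
    proof (rule SUP_least)
      fix X assume X: "X \<in> L1G Pset T T"
      show "ereal (\<integral>\<omega>. cond_gap P T t Et X \<omega> \<partial>P)
          \<le> enn2ereal (\<integral>\<^sup>+\<omega>. e2ennreal (SUP n. ereal (cond_gap P T t Et (z n) \<omega>)) \<partial>P)"
        by (rule integral_cond_gap_le_exp_SUP[of z, OF z AE_restr_to_subalg[OF subalgebra_P dom[OF X]] X])
    qed
  qed (rule exp_SUP_le_SUP_integral_cond_gap[of z, OF z])
  finally show ?thesis .
qed

lemma Etil_cong:
  assumes X: "X \<in> L1G Pset T T" and Y: "Y \<in> L1G Pset T T" and XY: "qs Pset (\<lambda>\<omega>. X \<omega> = Y \<omega>)"
  shows "Etil X = Etil Y"
proof -
  have le: "Etil X' \<le> Etil Y'"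
    if "X' \<in> L1G Pset T T" "Y' \<in> L1G Pset T T" "qs Pset (\<lambda>\<omega>. X' \<omega> = Y' \<omega>)" for X' Y'
  proof -
    have "Ehat Pset (\<lambda>\<omega>. X' \<omega> - Y' \<omega>) = (SUP Q\<in>Pset. ereal 0)"
      unfolding Ehat_def
    proof (rule SUP_cong[OF refl])
      fix Q assume "Q \<in> Pset"
      then have "AE \<omega> in Q. X' \<omega> - Y' \<omega> = 0" using that(3) unfolding qs_def by auto
      then show "ereal (\<integral>\<omega>. X' \<omega> - Y' \<omega> \<partial>Q) = ereal 0" by (simp add: integral_eq_zero_AE)
    qed
    then have "ereal (Etil X' - Etil Y') \<le> 0"
      using Etil_dom[OF that(1,2)] Pset_ne by (simp add: zero_ereal_def)
    then show ?thesis by (simp add: zero_ereal_def)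
  qed
  have "qs Pset (\<lambda>\<omega>. Y \<omega> = X \<omega>)" using XY unfolding qs_def by (auto elim: eventually_mono)
  then show ?thesis using le[OF X Y XY] le[OF Y X] by simp
qed

lemma alpha0_T_le: "alpha0 Pset T Etil T P
    \<le> alpha0 Pset T Etil t P + (SUP X\<in>L1G Pset T T. ereal (\<integral>\<omega>. cond_gap P T t Et X \<omega> \<partial>P))"
  unfolding alpha0_def[of _ _ _ T]
proof (rule SUP_least)
  fix X assume X: "X \<in> L1G Pset T T"
  have "(\<integral>\<omega>. X \<omega> \<partial>P) - Etil X = ((\<integral>\<omega>. Et t X \<omega> \<partial>P) - Etil (Et t X)) + (\<integral>\<omega>. cond_gap P T t Et X \<omega> \<partial>P)"
    using integral_cond_gap[OF X] Etil_cons[OF t_in X] by simp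
  moreover have "ereal ((\<integral>\<omega>. Et t X \<omega> \<partial>P) - Etil (Et t X)) \<le> alpha0 Pset T Etil t P"
    unfolding alpha0_def using Et_range[OF t_in X] by (rule SUP_upper)
  moreover have "ereal (\<integral>\<omega>. cond_gap P T t Et X \<omega> \<partial>P)
      \<le> (SUP X\<in>L1G Pset T T. ereal (\<integral>\<omega>. cond_gap P T t Et X \<omega> \<partial>P))"
    using X by (rule SUP_upper)
  ultimately show "ereal ((\<integral>\<omega>. X \<omega> \<partial>P) - Etil X)
      \<le> alpha0 Pset T Etil t P + (SUP X\<in>L1G Pset T T. ereal (\<integral>\<omega>. cond_gap P T t Et X \<omega> \<partial>P))"
    by (metis add_mono plus_ereal.simps(1))
qed

text \<open>Conversely, \<open>X - \<tilde>E\<^sub>t[X] + Y\<close> has conditional risk \<open>Y\<close> and realises the sum of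
  the two penalty terms.\<close>

lemma alpha0_sum_witness:
  assumes X: "X \<in> L1G Pset T T" and Y: "Y \<in> L1G Pset T t"
  shows "\<exists>Z\<in>L1G Pset T T. (\<integral>\<omega>. Z \<omega> \<partial>P) - Etil Z
      = (\<integral>\<omega>. cond_gap P T t Et X \<omega> \<partial>P) + ((\<integral>\<omega>. Y \<omega> \<partial>P) - Etil Y)"
proof
  define Z where "Z \<omega> = (X \<omega> + - Et t X \<omega>) + Y \<omega>" for \<omega>
  have mE: "(\<lambda>\<omega>. - Et t X \<omega>) \<in> L1G Pset T t"
    by (rule L1G_uminus[OF Pset_prob t_nonneg Et_range[OF t_in X]])
  have L1G_tT: "V \<in> L1G Pset T t \<Longrightarrow> V \<in> L1G Pset T T" for V
    by (rule L1G_mono[OF Pset_prob t_le_T])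
  have X2: "(\<lambda>\<omega>. X \<omega> + - Et t X \<omega>) \<in> L1G Pset T T"
    using L1G_add[OF Pset_prob order_refl X L1G_tT[OF mE]] .
  show Z_in: "Z \<in> L1G Pset T T"
    unfolding Z_def using L1G_add[OF Pset_prob order_refl X2 L1G_tT[OF Y]] .
  have "qs Pset (\<lambda>\<omega>. Et t Z \<omega> = Y \<omega>)"
    unfolding qs_def
  proof
    fix Q assume "Q \<in> Pset"
    with Et_transl[OF t_in X2 Y] Et_transl[OF t_in X mE]
    have "AE \<omega> in Q. Et t Z \<omega> = Et t (\<lambda>\<omega>. X \<omega> + - Et t X \<omega>) \<omega> + Y \<omega>"
      "AE \<omega> in Q. Et t (\<lambda>\<omega>. X \<omega> + - Et t X \<omega>) \<omega> = Et t X \<omega> + - Et t X \<omega>"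
      unfolding qs_def Z_def by blast+
    then show "AE \<omega> in Q. Et t Z \<omega> = Y \<omega>" by eventually_elim simp
  qed
  then have "Etil Z = Etil Y"
    using Etil_cons[OF t_in Z_in] Etil_cong[OF L1G_tT[OF Et_range[OF t_in Z_in]] L1G_tT[OF Y]] by simp
  moreover have "(\<integral>\<omega>. Z \<omega> \<partial>P) = (\<integral>\<omega>. X \<omega> \<partial>P) - (\<integral>\<omega>. Et t X \<omega> \<partial>P) + (\<integral>\<omega>. Y \<omega> \<partial>P)"
    unfolding Z_def
    using L1G_integrable_P[OF X order_refl] Et_integrable[OF X] L1G_integrable_P[OF Y t_le_T] by simp
  ultimately show "(\<integral>\<omega>. Z \<omega> \<partial>P) - Etil Z
      = (\<integral>\<omega>. cond_gap P T t Et X \<omega> \<partial>P) + ((\<integral>\<omega>. Y \<omega> \<partial>P) - Etil Y)"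
    using integral_cond_gap[OF X] by simp
qed

lemma alpha0_T_ge: "alpha0 Pset T Etil t P + (SUP X\<in>L1G Pset T T. ereal (\<integral>\<omega>. cond_gap P T t Et X \<omega> \<partial>P))
    \<le> alpha0 Pset T Etil T P" (is "_ + ?S \<le> _")
proof -
  have ne: "L1G Pset T t \<noteq> {}" "L1G Pset T T \<noteq> {}"
    using L1G_const[OF Pset_prob t_nonneg] zero_in_L1G by blast+
  have "alpha0 Pset T Etil t P + ?S = (SUP Y\<in>L1G Pset T t. ereal ((\<integral>\<omega>. Y \<omega> \<partial>P) - Etil Y) + ?S)"
    unfolding alpha0_def using ne SUP_integral_cond_gap_nonneg by (intro SUP_ereal_add_left[symmetric]) auto
  also have "\<dots> \<le> alpha0 Pset T Etil T P"
  proof (rule SUP_least)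
    fix Y assume Y: "Y \<in> L1G Pset T t"
    have "ereal ((\<integral>\<omega>. Y \<omega> \<partial>P) - Etil Y) + ?S
        = (SUP X\<in>L1G Pset T T. ereal (\<integral>\<omega>. cond_gap P T t Et X \<omega> \<partial>P) + ereal ((\<integral>\<omega>. Y \<omega> \<partial>P) - Etil Y))"
      using ne by (subst SUP_ereal_add_left) (auto simp: add.commute)
    also have "\<dots> \<le> alpha0 Pset T Etil T P"
    proof (rule SUP_least)
      fix X assume X: "X \<in> L1G Pset T T"
      obtain Z where Z: "Z \<in> L1G Pset T T" and "(\<integral>\<omega>. Z \<omega> \<partial>P) - Etil Z
          = (\<integral>\<omega>. cond_gap P T t Et X \<omega> \<partial>P) + ((\<integral>\<omega>. Y \<omega> \<partial>P) - Etil Y)"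
        using alpha0_sum_witness[OF X Y] by blast
      then have "ereal (\<integral>\<omega>. cond_gap P T t Et X \<omega> \<partial>P) + ereal ((\<integral>\<omega>. Y \<omega> \<partial>P) - Etil Y)
          = ereal ((\<integral>\<omega>. Z \<omega> \<partial>P) - Etil Z)" by simp
      also have "\<dots> \<le> alpha0 Pset T Etil T P" unfolding alpha0_def using Z by (rule SUP_upper)
      finally show "ereal (\<integral>\<omega>. cond_gap P T t Et X \<omega> \<partial>P) + ereal ((\<integral>\<omega>. Y \<omega> \<partial>P) - Etil Y)
          \<le> alpha0 Pset T Etil T P" .
    qed
    finally show "ereal ((\<integral>\<omega>. Y \<omega> \<partial>P) - Etil Y) + ?S \<le> alpha0 Pset T Etil T P" .
  qed
  finally show ?thesis .
qed

end

theorem proposition3p5: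
  fixes T :: real
    and Pset :: "(real \<Rightarrow> 'd::euclidean_space) measure set"
    and Et :: "real \<Rightarrow> ((real \<Rightarrow> 'd) \<Rightarrow> real) \<Rightarrow> (real \<Rightarrow> 'd) \<Rightarrow> real"
    and Etil :: "((real \<Rightarrow> 'd) \<Rightarrow> real) \<Rightarrow> real"
    and P :: "(real \<Rightarrow> 'd) measure" and t :: real
  assumes T_pos: "T > 0"
    and Pset_ne: "Pset \<noteq> {}"
    and Pset_prob: "\<And>Q. Q \<in> Pset \<Longrightarrow> prob_space Q \<and> space Q = paths T \<and> sets Q = sets (filt T T)"
    and Et_range: "\<And>s X. s \<in> {0..T} \<Longrightarrow> X \<in> L1G Pset T T \<Longrightarrow> Et s X \<in> L1G Pset T s"
    and Et_mono: "\<And>s X Y. s \<in> {0..T} \<Longrightarrow> X \<in> L1G Pset T T \<Longrightarrow> Y \<in> L1G Pset T T \<Longrightarrow>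
        qs Pset (\<lambda>\<omega>. X \<omega> \<le> Y \<omega>) \<Longrightarrow> qs Pset (\<lambda>\<omega>. Et s X \<omega> \<le> Et s Y \<omega>)"
    and Et_const: "\<And>s c. s \<in> {0..T} \<Longrightarrow> qs Pset (\<lambda>\<omega>. Et s (\<lambda>_. c) \<omega> = c)"
    and Et_transl: "\<And>s X Y. s \<in> {0..T} \<Longrightarrow> X \<in> L1G Pset T T \<Longrightarrow> Y \<in> L1G Pset T s \<Longrightarrow>
        qs Pset (\<lambda>\<omega>. Et s (\<lambda>\<omega>'. X \<omega>' + Y \<omega>') \<omega> = Et s X \<omega> + Y \<omega>)"
    and Et_convex: "\<And>s X Y w. s \<in> {0..T} \<Longrightarrow> X \<in> L1G Pset T T \<Longrightarrow> Y \<in> L1G Pset T T \<Longrightarrow>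
        w \<in> L1G Pset T s \<Longrightarrow> (\<forall>\<omega>. 0 \<le> w \<omega> \<and> w \<omega> \<le> 1) \<Longrightarrow>
        (\<lambda>\<omega>. w \<omega> * X \<omega> + (1 - w \<omega>) * Y \<omega>) \<in> L1G Pset T T \<Longrightarrow>
        qs Pset (\<lambda>\<omega>. Et s (\<lambda>\<omega>'. w \<omega>' * X \<omega>' + (1 - w \<omega>') * Y \<omega>') \<omega>
                     \<le> w \<omega> * Et s X \<omega> + (1 - w \<omega>) * Et s Y \<omega>)"
    and Et_tower: "\<And>r s X. 0 \<le> r \<Longrightarrow> r \<le> s \<Longrightarrow> s \<le> T \<Longrightarrow> X \<in> L1G Pset T T \<Longrightarrow>
        qs Pset (\<lambda>\<omega>. Et r (Et s X) \<omega> = Et r X \<omega>)"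
    and Etil_Et0: "\<And>X. X \<in> L1G Pset T T \<Longrightarrow> qs Pset (\<lambda>\<omega>. Et 0 X \<omega> = Etil X)"
    and Etil_cons: "\<And>s X. s \<in> {0..T} \<Longrightarrow> X \<in> L1G Pset T T \<Longrightarrow> Etil (Et s X) = Etil X"
    and Etil_dom: "\<And>X Y. X \<in> L1G Pset T T \<Longrightarrow> Y \<in> L1G Pset T T \<Longrightarrow>
        ereal (Etil X - Etil Y) \<le> Ehat Pset (\<lambda>\<omega>. X \<omega> - Y \<omega>)"
    and P_in: "P \<in> Pset"
    and t_in: "t \<in> {0..T}"
  shows "exp_ereal P (alphaT Pset T Et t P) =
           (SUP X\<in>L1G Pset T T. ereal (\<integral>\<omega>. (real_cond_exp P (filt T t) X \<omega> - Et t X \<omega>) \<partial>P))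
       \<and> alpha0 Pset T Etil T P = alpha0 Pset T Etil t P + exp_ereal P (alphaT Pset T Et t P)"
proof -
  note setting = Pset_ne Pset_prob Et_range Et_const Et_transl Et_convex Etil_cons Etil_dom P_in t_in
  have "exp_ereal P (alphaT Pset T Et t P)
      = (SUP X\<in>L1G Pset T T. ereal (\<integral>\<omega>. cond_gap P T t Et X \<omega> \<partial>P))"
    by (rule exp_alphaT_eq_SUP_integral_cond_gap[OF setting])
  moreover have "alpha0 Pset T Etil T P
      = alpha0 Pset T Etil t P + (SUP X\<in>L1G Pset T T. ereal (\<integral>\<omega>. cond_gap P T t Et X \<omega> \<partial>P))"
    using alpha0_T_le[OF setting] alpha0_T_ge[OF setting] by (rule antisym)
  ultimately show ?thesis unfolding cond_gap_def by simp
qed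

end
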